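(* Let $(R,{\mathfrak m})$ be a $d$-dimensional Cohen–Macaulay local ring, $I=(f_1,\ldots,f_n)$ an ideal minimally generated by $n$ elements with $g=\mathrm{ht}(I)\ge1$, $B=R[y_1,\ldots,y_n]$, and let $\mathcal Z_\bullet$ and $\mathfrak T_\bullet$ be the complexes described in the context. Then the complex $\mathfrak T_\bullet$ and the truncation $0\to\mathcal Z_{n-g}\to\cdots\to\mathcal Z_0\to0$ can be spliced together into a complex $$\mathfrak L_\bullet:\quad 0\to\mathfrak T_{g-2}\to\cdots\to\mathfrak T_1\to\mathfrak T_0\to\mathcal Z_{n-g}\to\cdots\to\mathcal Z_0\to0,$$ where $\mathfrak T_0\to\mathcal Z_{n-g}$ is the composite of $\partial_{\mathbf f}:\wedge^{n-g+2}R^n\otimes_RB(-n+g-1)\to Z_{n-g+1}\otimes_RB(-n+g-1)=\mathcal Z_{n-g+1}$ with the differential $\mathcal Z_{n-g+1}\to\mathcal Z_{n-g}$. If $\mathcal Z_\bullet$ is acyclic, then $\mathfrak L_\bullet$ is acyclic.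
   Context: $B$ is standard graded with $\deg y_j=1$. $K_\bullet=\wedge^\bullet R^n$ is the Koszul complex of $f_1,\ldots,f_n$ with differential $\partial_{\mathbf f}$, and $Z_i$ its module of $i$-cycles; $\partial_{\mathbf y}$ is the differential of the Koszul complex $K(y_1,\ldots,y_n;B)=\wedge^\bullet R^n\otimes_R B$ (degree $1$ in $\mathbf y$). The approximation complex $\mathcal Z_\bullet$ has $\mathcal Z_i=Z_i\otimes_RB(-i)$ for $0\le i\le n-1$, with differential induced by $\partial_{\mathbf y}$; acyclic means $H_i=0$ for $i>0$. Let $\mathfrak D$ be the double complex with entries $\mathfrak D(c,r)=\wedge^{n-g+2+c+r}R^n\otimes_RB(-n+g-1-c)$ for $0\le c\le g-2$, $r\ge0$ (zero when $n-g+2+c+r>n$), with horizontal maps $\partial_{\mathbf y}:\mathfrak D(c,r)\to\mathfrak D(c-1,r)$ and vertical maps $\partial_{\mathbf f}:\mathfrak D(c,r)\to\mathfrak D(c,r-1)$. $\mathfrak T_\bullet$ is its total complex, $\mathfrak T_k=\bigoplus_{c+r=k}\mathfrak D(c,r)$; thus $\mathfrak T_0=\wedge^{n-g+2}R^n\otimes_RB(-n+g-1)$ and $\mathfrak T_{g-2}=\bigoplus_{j=1}^{g-1}\wedge^nR^n\otimes_RB(-n+j)$. *)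

theory Defs
  imports Main "HOL-Library.Poly_Mapping" "HOL-Library.Function_Algebras"
begin

section \<open>Commutative algebra over a commutative ring (the whole type is the ring R)\<close>

definition is_ideal :: "'a::comm_ring_1 set \<Rightarrow> bool" where
  "is_ideal I \<longleftrightarrow> 0 \<in> I \<and> (\<forall>x\<in>I. \<forall>y\<in>I. x + y \<in> I) \<and> (\<forall>r. \<forall>x\<in>I. r * x \<in> I)"

definition ideal_gen :: "(nat \<Rightarrow> 'a::comm_ring_1) \<Rightarrow> nat \<Rightarrow> 'a set" where
  "ideal_gen h k = {\<Sum>j<k. r j * h j | r. True}"

definition is_prime_ideal :: "'a::comm_ring_1 set \<Rightarrow> bool" where
  "is_prime_ideal P \<longleftrightarrow> is_ideal P \<and> P \<noteq> UNIV \<and> (\<forall>a b. a * b \<in> P \<longrightarrow> a \<in> P \<or> b \<in> P)"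

definition is_maximal_ideal :: "'a::comm_ring_1 set \<Rightarrow> bool" where
  "is_maximal_ideal M \<longleftrightarrow> is_ideal M \<and> M \<noteq> UNIV \<and>
     (\<forall>J. is_ideal J \<and> M \<subseteq> J \<longrightarrow> J = M \<or> J = UNIV)"

definition noetherian_ring :: "'a::comm_ring_1 itself \<Rightarrow> bool" where
  "noetherian_ring _ \<longleftrightarrow> (\<forall>I::'a set. is_ideal I \<longrightarrow> (\<exists>h k. I = ideal_gen h k))"

definition local_ring_max :: "'a::comm_ring_1 set \<Rightarrow> bool" where
  "local_ring_max m \<longleftrightarrow> noetherian_ring TYPE('a) \<and> is_maximal_ideal m \<and>
     (\<forall>M. is_maximal_ideal M \<longrightarrow> M = m)"

definition prime_chain :: "'a::comm_ring_1 set list \<Rightarrow> bool" where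
  "prime_chain ps \<longleftrightarrow> ps \<noteq> [] \<and> (\<forall>P\<in>set ps. is_prime_ideal P) \<and> sorted_wrt (\<subset>) ps"

definition krull_dim_eq :: "'a::comm_ring_1 itself \<Rightarrow> nat \<Rightarrow> bool" where
  "krull_dim_eq _ d \<longleftrightarrow>
     (\<exists>ps::'a set list. prime_chain ps \<and> length ps = d + 1) \<and>
     (\<forall>ps::'a set list. prime_chain ps \<longrightarrow> length ps \<le> d + 1)"

definition prime_height_eq :: "'a::comm_ring_1 set \<Rightarrow> nat \<Rightarrow> bool" where
  "prime_height_eq P h \<longleftrightarrow>
     (\<exists>ps. prime_chain ps \<and> last ps = P \<and> length ps = h + 1) \<and>
     (\<forall>ps. prime_chain ps \<and> last ps = P \<longrightarrow> length ps \<le> h + 1)"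

definition ideal_height_eq :: "'a::comm_ring_1 set \<Rightarrow> nat \<Rightarrow> bool" where
  "ideal_height_eq I g \<longleftrightarrow>
     (\<exists>P. is_prime_ideal P \<and> I \<subseteq> P \<and> prime_height_eq P g) \<and>
     (\<forall>P h. is_prime_ideal P \<and> I \<subseteq> P \<and> prime_height_eq P h \<longrightarrow> g \<le> h)"

definition regular_seq_in :: "'a::comm_ring_1 set \<Rightarrow> (nat \<Rightarrow> 'a) \<Rightarrow> nat \<Rightarrow> bool" where
  "regular_seq_in m x k \<longleftrightarrow> (\<forall>i<k. x i \<in> m) \<and> ideal_gen x k \<noteq> UNIV \<and>
     (\<forall>i<k. \<forall>r. r * x i \<in> ideal_gen x i \<longrightarrow> r \<in> ideal_gen x i)"

definition depth_eq :: "'a::comm_ring_1 set \<Rightarrow> nat \<Rightarrow> bool" where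
  "depth_eq m t \<longleftrightarrow> (\<exists>x. regular_seq_in m x t) \<and> (\<forall>x k. regular_seq_in m x k \<longrightarrow> k \<le> t)"

definition cohen_macaulay_local :: "'a::comm_ring_1 set \<Rightarrow> nat \<Rightarrow> bool" where
  "cohen_macaulay_local m d \<longleftrightarrow> local_ring_max m \<and> krull_dim_eq TYPE('a) d \<and> depth_eq m d"

definition minimally_generates :: "(nat \<Rightarrow> 'a::comm_ring_1) \<Rightarrow> nat \<Rightarrow> 'a set \<Rightarrow> bool" where
  "minimally_generates f n I \<longleftrightarrow> I = ideal_gen f n \<and> (\<forall>k<n. \<forall>h. ideal_gen h k \<noteq> I)"

type_synonym 'a polyB = "(nat \<Rightarrow>\<^sub>0 nat) \<Rightarrow>\<^sub>0 'a"

definition constB :: "'a::comm_ring_1 \<Rightarrow> 'a polyB" where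
  "constB r = Poly_Mapping.single 0 r"

definition varB :: "nat \<Rightarrow> 'a::comm_ring_1 polyB" where
  "varB j = Poly_Mapping.single (Poly_Mapping.single j 1) 1"

text \<open>Elements of wedge^i B^n: coefficient functions on subsets S of {0..<n} with |S| = i
  (coefficient of e_S, S listed increasingly).\<close>
definition ext :: "nat \<Rightarrow> nat \<Rightarrow> (nat set \<Rightarrow> 'b::zero) set" where
  "ext n i = {x. \<forall>S. x S \<noteq> 0 \<longrightarrow> S \<subseteq> {..<n} \<and> card S = i}"

text \<open>Koszul differential of a_0,...,a_(n-1):
  e_S \<mapsto> sum_k (-1)^k a_(s_k) e_(S - s_k), where s_0 < s_1 < ...\<close>
definition kos :: "nat \<Rightarrow> (nat \<Rightarrow> 'b::comm_ring_1) \<Rightarrow> (nat set \<Rightarrow> 'b) \<Rightarrow> (nat set \<Rightarrow> 'b)" where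
  "kos n a x = (\<lambda>T. if T \<subseteq> {..<n} then
      (\<Sum>j\<in>{..<n} - T. (-1) ^ card {t\<in>T. t < j} * a j * x (insert j T)) else 0)"

definition dF :: "nat \<Rightarrow> (nat \<Rightarrow> 'a::comm_ring_1) \<Rightarrow> (nat set \<Rightarrow> 'a polyB) \<Rightarrow> (nat set \<Rightarrow> 'a polyB)" where
  "dF n f = kos n (\<lambda>j. constB (f j))"

definition dY :: "nat \<Rightarrow> (nat set \<Rightarrow> 'a::comm_ring_1 polyB) \<Rightarrow> (nat set \<Rightarrow> 'a polyB)" where
  "dY n = kos n varB"

text \<open>Z_i (x)_R B, realised (B being R-free) as the d_f-cycles in wedge^i B^n; zero for i \<ge> n.\<close>
definition Zmod :: "nat \<Rightarrow> (nat \<Rightarrow> 'a::comm_ring_1) \<Rightarrow> nat \<Rightarrow> (nat set \<Rightarrow> 'a polyB) set" where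
  "Zmod n f i = (if i < n then {x \<in> ext n i. dF n f x = 0} else {0})"

definition Z_acyclic :: "nat \<Rightarrow> (nat \<Rightarrow> 'a::comm_ring_1) \<Rightarrow> bool" where
  "Z_acyclic n f \<longleftrightarrow> (\<forall>i. 1 \<le> i \<longrightarrow> i < n \<longrightarrow>
     (\<forall>x\<in>Zmod n f i. dY n x = 0 \<longrightarrow> (\<exists>z\<in>Zmod n f (i+1). dY n z = x)))"

text \<open>An element of T_k = (+)_{c+r=k, 0<=c<=g-2} D(c,r) is a family x indexed by c; the summand
  D(c,k-c) is wedge^(n-g+2+k) B^n (grading shifts are omitted).\<close>
definition Tmod :: "nat \<Rightarrow> nat \<Rightarrow> nat \<Rightarrow> (nat \<Rightarrow> nat set \<Rightarrow> 'a::comm_ring_1 polyB) set" where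
  "Tmod n g k = {x. \<forall>c. if c + 2 \<le> g \<and> c \<le> k then x c \<in> ext n (n + 2 + k - g) else x c = 0}"

text \<open>Total differential T_k \<rightarrow> T_(k-1): horizontal d_y D(c+1,r) \<rightarrow> D(c,r) plus
  vertical d_f D(c,r+1) \<rightarrow> D(c,r).\<close>
definition Tdiff :: "nat \<Rightarrow> (nat \<Rightarrow> 'a::comm_ring_1) \<Rightarrow> nat \<Rightarrow> nat \<Rightarrow>
    (nat \<Rightarrow> nat set \<Rightarrow> 'a polyB) \<Rightarrow> (nat \<Rightarrow> nat set \<Rightarrow> 'a polyB)" where
  "Tdiff n f g k x = (\<lambda>c. if c + 2 \<le> g \<and> c + 1 \<le> k then dF n f (x c) + dY n (x (c + 1)) else 0)"

definition Taug :: "nat \<Rightarrow> (nat \<Rightarrow> 'a::comm_ring_1) \<Rightarrow> (nat \<Rightarrow> nat set \<Rightarrow> 'a polyB) \<Rightarrow> (nat set \<Rightarrow> 'a polyB)" where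
  "Taug n f x = dY n (dF n f (x 0))"

text \<open>L is a complex: all maps land in the right modules and consecutive composites vanish
  (the Z-part is a complex by construction).\<close>
definition L_is_complex :: "nat \<Rightarrow> (nat \<Rightarrow> 'a::comm_ring_1) \<Rightarrow> nat \<Rightarrow> bool" where
  "L_is_complex n f g \<longleftrightarrow>
     (\<forall>x\<in>Tmod n g 0. Taug n f x \<in> Zmod n f (n - g)) \<and>
     (\<forall>k. \<forall>x\<in>Tmod n g (Suc k). Tdiff n f g (Suc k) x \<in> Tmod n g k) \<and>
     (0 < n - g \<longrightarrow> (\<forall>x\<in>Tmod n g 0. dY n (Taug n f x) = 0)) \<and>
     (\<forall>x\<in>Tmod n g 1. Taug n f (Tdiff n f g 1 x) = 0) \<and>
     (\<forall>k. \<forall>x\<in>Tmod n g (Suc (Suc k)). Tdiff n f g (Suc k) (Tdiff n f g (Suc (Suc k)) x) = 0)"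

text \<open>L is acyclic: homology vanishes at every position of L except position 0 (Z_0).\<close>
definition L_acyclic :: "nat \<Rightarrow> (nat \<Rightarrow> 'a::comm_ring_1) \<Rightarrow> nat \<Rightarrow> bool" where
  "L_acyclic n f g \<longleftrightarrow>
     (\<forall>i. 1 \<le> i \<longrightarrow> i < n - g \<longrightarrow>
        (\<forall>x\<in>Zmod n f i. dY n x = 0 \<longrightarrow> (\<exists>z\<in>Zmod n f (i+1). dY n z = x))) \<and>
     (1 \<le> n - g \<longrightarrow>
        (\<forall>x\<in>Zmod n f (n - g). dY n x = 0 \<longrightarrow> (\<exists>t\<in>Tmod n g 0. Taug n f t = x))) \<and>
     (\<forall>x\<in>Tmod n g 0. Taug n f x = 0 \<longrightarrow> (\<exists>z\<in>Tmod n g 1. Tdiff n f g 1 z = x)) \<and>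
     (\<forall>k. \<forall>x\<in>Tmod n g (Suc k). Tdiff n f g (Suc k) x = 0 \<longrightarrow>
        (\<exists>z\<in>Tmod n g (Suc (Suc k)). Tdiff n f g (Suc (Suc k)) z = x))"

end

theory Submission
  imports Defs
begin

text \<open>That L is a complex only uses d_f d_f = d_y d_y = 0 and d_f d_y = - d_y d_f. For
  acyclicity, a cycle of the total complex T is killed column by column from the top: in the
  interior of the double complex by exactness of the Koszul complex K(f; B) above degree n - g,
  and at the corner where T_0 meets Z_(n-g) by acyclicity of Z together with that exactness.

  Since B is R-free it suffices to show that K(f; R) is exact above n - g, and by depth
  sensitivity (the homotopy given by exterior multiplication, applied along the sequence)
  this follows from a regular sequence of length g in I = (f). Such a sequence exists because
  in a Cohen-Macaulay local ring grade equals height: a regular sequence x of length k < g in I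
  extends to one of length d = dim R inside m, along which associated primes strictly grow
  (Nakayama), so every associated prime of (x) has height at most k; hence I lies in none of
  them, and prime avoidance provides the next element.\<close>

section \<open>The Koszul differential\<close>

lemma ext_memI: "(\<And>S. x S \<noteq> 0 \<Longrightarrow> S \<subseteq> {..<n} \<and> card S = i) \<Longrightarrow> x \<in> ext n i"
  unfolding ext_def by blast

lemma ext_memD: "x \<in> ext n i \<Longrightarrow> x S \<noteq> 0 \<Longrightarrow> S \<subseteq> {..<n} \<and> card S = i"
  unfolding ext_def by blast

lemma ext_zero [simp]: "0 \<in> ext n i"
  by (simp add: ext_def)

lemma ext_add:
  fixes x y :: "nat set \<Rightarrow> 'b::comm_ring_1"
  assumes "x \<in> ext n i" "y \<in> ext n i"
  shows "x + y \<in> ext n i"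
proof (rule ext_memI)
  fix S assume "(x + y) S \<noteq> 0"
  then have "x S \<noteq> 0 \<or> y S \<noteq> 0" by auto
  then show "S \<subseteq> {..<n} \<and> card S = i" using ext_memD assms by blast
qed

lemma ext_diff:
  fixes x y :: "nat set \<Rightarrow> 'b::comm_ring_1"
  assumes "x \<in> ext n i" "y \<in> ext n i"
  shows "x - y \<in> ext n i"
proof (rule ext_memI)
  fix S assume "(x - y) S \<noteq> 0"
  then have "x S \<noteq> 0 \<or> y S \<noteq> 0" by auto
  then show "S \<subseteq> {..<n} \<and> card S = i" using ext_memD assms by blast
qed

lemma ext_uminus:
  fixes x :: "nat set \<Rightarrow> 'b::comm_ring_1"
  shows "x \<in> ext n i \<Longrightarrow> - x \<in> ext n i"
  unfolding ext_def by simp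

lemma ext_mult_right:
  fixes x :: "nat set \<Rightarrow> 'b::comm_ring_1"
  assumes "x \<in> ext n i"
  shows "(\<lambda>T. x T * r) \<in> ext n i"
proof (rule ext_memI)
  fix S assume "x S * r \<noteq> 0"
  then have "x S \<noteq> 0" by auto
  then show "S \<subseteq> {..<n} \<and> card S = i" using ext_memD assms by blast
qed

lemma ext_eq_0_if_less:
  assumes "x \<in> ext n i" "n < i"
  shows "x = 0"
proof
  fix S
  show "x S = 0 S"
  proof (rule ccontr)
    assume "x S \<noteq> 0 S"
    then have "S \<subseteq> {..<n}" "card S = i" using ext_memD[OF assms(1)] by auto
    then show False
      using assms(2) card_mono[OF finite_lessThan \<open>S \<subseteq> {..<n}\<close>] by simp
  qed
qed

definition koszul_sign :: "nat set \<Rightarrow> nat \<Rightarrow> 'b::comm_ring_1" where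
  "koszul_sign T j = (-1) ^ card {t\<in>T. t < j}"

lemma kos_altdef:
  "kos n a x = (\<lambda>T. if T \<subseteq> {..<n} then
      (\<Sum>j\<in>{..<n} - T. koszul_sign T j * a j * x (insert j T)) else 0)"
  unfolding kos_def koszul_sign_def by simp

lemma koszul_sign_square: "koszul_sign T j * koszul_sign T j = (1::'b::comm_ring_1)"
  unfolding koszul_sign_def by (simp add: power_mult_distrib[symmetric])

lemma koszul_sign_insert:
  assumes "finite U" "j \<notin> U"
  shows "koszul_sign (insert j U) k = (if j < k then - koszul_sign U k else (koszul_sign U k :: 'b::comm_ring_1))"
proof -
  have "{t\<in>insert j U. t < k} = (if j < k then insert j {t\<in>U. t < k} else {t\<in>U. t < k})"
    by auto
  then show ?thesis
    unfolding koszul_sign_def using assms by simp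
qed

lemma koszul_sign_insert_self: "koszul_sign (insert j U) j = koszul_sign U j"
proof -
  have "{t\<in>insert j U. t < j} = {t\<in>U. t < j}" by auto
  then show ?thesis unfolding koszul_sign_def by simp
qed

lemma koszul_sign_remove_self: "koszul_sign (U - {j}) j = koszul_sign U j"
proof -
  have "{t\<in>U - {j}. t < j} = {t\<in>U. t < j}" by auto
  then show ?thesis unfolding koszul_sign_def by simp
qed

lemma koszul_sign_swap:
  assumes "finite T" "j \<notin> T" "k \<notin> T" "j \<noteq> k"
  shows "koszul_sign T k * koszul_sign (insert k T) j
    = - (koszul_sign T j * koszul_sign (insert j T) k :: 'b::comm_ring_1)"
  using assms by (auto simp: koszul_sign_insert)

lemma koszul_sign_insert_remove:
  assumes fin: "finite T" and k: "k \<in> T" and j: "j \<notin> T"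
  shows "koszul_sign T j * koszul_sign (insert j T) k
    + koszul_sign T k * koszul_sign (T - {k}) j = (0::'b::comm_ring_1)"
proof -
  define U where "U = T - {k}"
  have T: "T = insert k U" and kU: "k \<notin> U" and finU: "finite U" and jU: "j \<notin> U"
    and jk: "j \<noteq> k"
    using k j fin unfolding U_def by auto
  have "koszul_sign (insert j T) k = (koszul_sign (insert j U) k :: 'b)"
    unfolding T insert_commute[of j k] by (rule koszul_sign_insert_self)
  moreover have "koszul_sign T k = (koszul_sign U k :: 'b)"
    unfolding T by (rule koszul_sign_insert_self)
  moreover have "koszul_sign T j = (if k < j then - koszul_sign U j else (koszul_sign U j :: 'b))"
    unfolding T by (rule koszul_sign_insert[OF finU kU])
  ultimately show ?thesis
    using jk by (simp add: koszul_sign_insert[OF finU jU] U_def[symmetric])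
qed

lemma sum_offdiagonal_antisym_eq_0:
  fixes F :: "nat \<Rightarrow> nat \<Rightarrow> 'b::comm_ring_1"
  assumes "finite A" "\<And>j k. j \<in> A \<Longrightarrow> k \<in> A \<Longrightarrow> j \<noteq> k \<Longrightarrow> F k j = - F j k"
  shows "(\<Sum>j\<in>A. \<Sum>k\<in>A - {j}. F j k) = 0"
  using assms
proof (induction A rule: finite_induct)
  case empty
  then show ?case by simp
next
  case (insert x A)
  have IH: "(\<Sum>j\<in>A. \<Sum>k\<in>A - {j}. F j k) = 0"
    using insert.IH insert.prems by blast
  have inner: "(\<Sum>k\<in>insert x A - {j}. F j k) = F j x + (\<Sum>k\<in>A - {j}. F j k)" if "j \<in> A" for j
  proof -
    have "insert x A - {j} = insert x (A - {j})" "x \<notin> A - {j}" using that insert.hyps by auto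
    then show ?thesis using insert.hyps by simp
  qed
  have "(\<Sum>k\<in>insert x A - {x}. F x k) = (\<Sum>k\<in>A. F x k)"
    using insert.hyps by (intro sum.cong) auto
  moreover have "(\<Sum>j\<in>A. F j x) = - (\<Sum>k\<in>A. F x k)"
    using insert.prems insert.hyps
    by (simp add: sum_negf[symmetric]) (intro sum.cong refl, metis insertCI)
  ultimately show ?case
    using insert.hyps IH by (simp add: inner sum.distrib)
qed

lemma kos_kos_apply:
  assumes "T \<subseteq> {..<n}"
  shows "kos n a (kos n b z) T = (\<Sum>j\<in>{..<n} - T. \<Sum>k\<in>({..<n} - T) - {j}.
      (koszul_sign T j * koszul_sign (insert j T) k) * (a j * b k) * z (insert k (insert j T)))"
proof -
  have "kos n b z (insert j T) = (\<Sum>k\<in>({..<n} - T) - {j}.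
      koszul_sign (insert j T) k * b k * z (insert k (insert j T)))" if "j \<in> {..<n} - T" for j
  proof -
    have "{..<n} - insert j T = ({..<n} - T) - {j}" by auto
    then show ?thesis using that assms by (simp add: kos_altdef)
  qed
  then show ?thesis
    using assms by (simp add: kos_altdef sum_distrib_left algebra_simps)
qed

lemma kos_kos: "kos n a (kos n a z) = 0"
proof
  fix T
  show "kos n a (kos n a z) T = 0 T"
  proof (cases "T \<subseteq> {..<n}")
    case True
    then have fin: "finite T" using finite_subset by blast
    show ?thesis
      unfolding kos_kos_apply[OF True] zero_fun_def
    proof (rule sum_offdiagonal_antisym_eq_0)
      fix j k assume jk: "j \<in> {..<n} - T" "k \<in> {..<n} - T" "j \<noteq> k"
      have "(koszul_sign T k * koszul_sign (insert k T) j) * (a k * a j) * z (insert j (insert k T)) =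
         (koszul_sign T k * koszul_sign (insert k T) j) * (a j * a k) * z (insert k (insert j T))"
        by (simp add: insert_commute mult.commute)
      also have "\<dots> = - ((koszul_sign T j * koszul_sign (insert j T) k) * (a j * a k) * z (insert k (insert j T)))"
        using jk by (simp add: koszul_sign_swap[OF fin, of j k])
      finally show "(koszul_sign T k * koszul_sign (insert k T) j) * (a k * a j) * z (insert j (insert k T)) =
         - ((koszul_sign T j * koszul_sign (insert j T) k) * (a j * a k) * z (insert k (insert j T)))" .
    qed simp
  qed (simp add: kos_def)
qed

lemma kos_anticommute: "kos n a (kos n b z) = - kos n b (kos n a z)"
proof
  fix T
  show "kos n a (kos n b z) T = (- kos n b (kos n a z)) T"
  proof (cases "T \<subseteq> {..<n}")
    case True
    then have fin: "finite T" using finite_subset by blast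
    have "kos n a (kos n b z) T + kos n b (kos n a z) T =
      (\<Sum>j\<in>{..<n} - T. \<Sum>k\<in>({..<n} - T) - {j}. (koszul_sign T j * koszul_sign (insert j T) k)
         * (a j * b k + b j * a k) * z (insert k (insert j T)))"
      unfolding kos_kos_apply[OF True] by (simp add: sum.distrib[symmetric] algebra_simps)
    also have "\<dots> = 0"
    proof (rule sum_offdiagonal_antisym_eq_0)
      fix j k assume jk: "j \<in> {..<n} - T" "k \<in> {..<n} - T" "j \<noteq> k"
      have "(koszul_sign T k * koszul_sign (insert k T) j) * (a k * b j + b k * a j)
          * z (insert j (insert k T)) = (koszul_sign T k * koszul_sign (insert k T) j)
          * (a j * b k + b j * a k) * z (insert k (insert j T))"
        by (simp add: insert_commute mult.commute add.commute)
      also have "\<dots> = - ((koszul_sign T j * koszul_sign (insert j T) k) * (a j * b k + b j * a k)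
          * z (insert k (insert j T)))"
        using jk by (simp add: koszul_sign_swap[OF fin, of j k])
      finally show "(koszul_sign T k * koszul_sign (insert k T) j) * (a k * b j + b k * a j)
          * z (insert j (insert k T)) =
        - ((koszul_sign T j * koszul_sign (insert j T) k) * (a j * b k + b j * a k)
          * z (insert k (insert j T)))" .
    qed simp
    finally show ?thesis by (simp add: eq_neg_iff_add_eq_0)
  qed (simp add: kos_def)
qed

text \<open>Exterior multiplication by c 0 e_0 + ... + c (n - 1) e_(n-1).\<close>

definition wedge_mult :: "nat \<Rightarrow> (nat \<Rightarrow> 'b::comm_ring_1) \<Rightarrow> (nat set \<Rightarrow> 'b) \<Rightarrow> (nat set \<Rightarrow> 'b)" where
  "wedge_mult n c z =
     (\<lambda>T. if T \<subseteq> {..<n} then (\<Sum>k\<in>T. koszul_sign T k * c k * z (T - {k})) else 0)"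

lemma kos_wedge_mult_apply:
  assumes T: "T \<subseteq> {..<n}"
  shows "kos n a (wedge_mult n c z) T = (\<Sum>j\<in>{..<n} - T. a j * c j * z T
    + (\<Sum>k\<in>T. koszul_sign T j * koszul_sign (insert j T) k * a j * c k * z (insert j (T - {k}))))"
  unfolding kos_altdef using T
proof (simp, intro sum.cong refl)
  fix j assume j: "j \<in> {..<n} - T"
  then have jT: "j \<notin> T" and fin: "finite T" using T finite_subset by auto
  have "insert j T - {j} = T" "\<And>k. k \<in> T \<Longrightarrow> insert j T - {k} = insert j (T - {k})"
    using jT by auto
  then have "wedge_mult n c z (insert j T) = koszul_sign T j * c j * z T
      + (\<Sum>k\<in>T. koszul_sign (insert j T) k * c k * z (insert j (T - {k})))"
    unfolding wedge_mult_def using j T fin jT by (simp add: koszul_sign_insert_self)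
  then have "koszul_sign T j * a j * wedge_mult n c z (insert j T)
      = (koszul_sign T j * koszul_sign T j) * a j * c j * z T
      + (\<Sum>k\<in>T. koszul_sign T j * koszul_sign (insert j T) k * a j * c k * z (insert j (T - {k})))"
    by (simp add: distrib_left sum_distrib_left algebra_simps)
  then show "koszul_sign T j * a j * wedge_mult n c z (insert j T) = a j * c j * z T
      + (\<Sum>k\<in>T. koszul_sign T j * koszul_sign (insert j T) k * a j * c k * z (insert j (T - {k})))"
    by (simp add: koszul_sign_square)
qed

lemma wedge_mult_kos_apply:
  assumes T: "T \<subseteq> {..<n}"
  shows "wedge_mult n c (kos n a z) T = (\<Sum>k\<in>T. c k * a k * z T
    + (\<Sum>j\<in>{..<n} - T. koszul_sign T k * koszul_sign (T - {k}) j * c k * a j * z (insert j (T - {k}))))"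
  unfolding wedge_mult_def using T
proof (simp, intro sum.cong refl)
  fix k assume k: "k \<in> T"
  have "{..<n} - (T - {k}) = insert k ({..<n} - T)" "k \<notin> {..<n} - T" "T - {k} \<subseteq> {..<n}"
    using k T by auto
  then have "kos n a z (T - {k}) = koszul_sign T k * a k * z T
      + (\<Sum>j\<in>{..<n} - T. koszul_sign (T - {k}) j * a j * z (insert j (T - {k})))"
    using k by (simp add: kos_altdef koszul_sign_remove_self insert_absorb)
  then have "koszul_sign T k * c k * kos n a z (T - {k})
      = (koszul_sign T k * koszul_sign T k) * c k * a k * z T
      + (\<Sum>j\<in>{..<n} - T. koszul_sign T k * koszul_sign (T - {k}) j * c k * a j * z (insert j (T - {k})))"
    by (simp add: distrib_left sum_distrib_left algebra_simps)
  then show "koszul_sign T k * c k * kos n a z (T - {k}) = c k * a k * z T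
      + (\<Sum>j\<in>{..<n} - T. koszul_sign T k * koszul_sign (T - {k}) j * c k * a j * z (insert j (T - {k})))"
    by (simp add: koszul_sign_square)
qed

lemma kos_wedge_mult_cross_terms:
  assumes fin: "finite T"
  shows "(\<Sum>j\<in>{..<n} - T. \<Sum>k\<in>T. koszul_sign T j * koszul_sign (insert j T) k
        * a j * c k * z (insert j (T - {k})))
    + (\<Sum>k\<in>T. \<Sum>j\<in>{..<n} - T. koszul_sign T k * koszul_sign (T - {k}) j
        * c k * a j * z (insert j (T - {k}))) = (0::'b::comm_ring_1)"
proof -
  have "koszul_sign T j * koszul_sign (insert j T) k * a j * c k * z (insert j (T - {k}))
      + koszul_sign T k * koszul_sign (T - {k}) j * c k * a j * z (insert j (T - {k})) = 0"
    if "j \<in> {..<n} - T" "k \<in> T" for j k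
  proof -
    have "koszul_sign T j * koszul_sign (insert j T) k
        + koszul_sign T k * koszul_sign (T - {k}) j = (0::'b)"
      using that by (intro koszul_sign_insert_remove[OF fin that(2)]) simp
    then have "(koszul_sign T j * koszul_sign (insert j T) k
        + koszul_sign T k * koszul_sign (T - {k}) j) * (a j * c k * z (insert j (T - {k}))) = 0"
      by simp
    then show ?thesis by (simp add: algebra_simps)
  qed
  then show ?thesis
    by (simp add: sum.swap[of _ T] sum.distrib[symmetric])
qed

lemma kos_wedge_mult_homotopy:
  assumes supp: "\<And>S. z S \<noteq> 0 \<Longrightarrow> S \<subseteq> {..<n}"
  shows "kos n a (wedge_mult n c z) T + wedge_mult n c (kos n a z) T = (\<Sum>j<n. c j * a j) * z T"
proof (cases "T \<subseteq> {..<n}")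
  case False
  then have "z T = 0" using supp by blast
  then show ?thesis using False by (simp add: kos_def wedge_mult_def)
next
  case True
  then have fin: "finite T" using finite_subset by blast
  have "(\<Sum>j<n. c j * a j) = (\<Sum>j\<in>{..<n} - T. c j * a j) + (\<Sum>j\<in>T. c j * a j)"
    using True by (metis Diff_partition Int_Diff_disjoint finite_lessThan fin sum.subset_diff)
  then have "(\<Sum>j<n. c j * a j) * z T = (\<Sum>j\<in>{..<n} - T. c j * a j * z T) + (\<Sum>j\<in>T. c j * a j * z T)"
    by (simp add: distrib_right sum_distrib_right)
  then have diag: "(\<Sum>j\<in>{..<n} - T. a j * c j * z T) + (\<Sum>k\<in>T. c k * a k * z T)
      = (\<Sum>j<n. c j * a j) * z T"
    by (simp add: mult.commute)
  have "kos n a (wedge_mult n c z) T + wedge_mult n c (kos n a z) T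
    = ((\<Sum>j\<in>{..<n} - T. a j * c j * z T) + (\<Sum>k\<in>T. c k * a k * z T))
    + ((\<Sum>j\<in>{..<n} - T. \<Sum>k\<in>T. koszul_sign T j * koszul_sign (insert j T) k
        * a j * c k * z (insert j (T - {k})))
    + (\<Sum>k\<in>T. \<Sum>j\<in>{..<n} - T. koszul_sign T k * koszul_sign (T - {k}) j
        * c k * a j * z (insert j (T - {k}))))"
    unfolding kos_wedge_mult_apply[OF True] wedge_mult_kos_apply[OF True] sum.distrib
    by (simp only: add_ac)
  then show ?thesis
    unfolding kos_wedge_mult_cross_terms[OF fin] diag by simp
qed

lemma kos_ext_Suc:
  assumes "x \<in> ext n (Suc i)"
  shows "kos n a x \<in> ext n i"
proof (rule ext_memI)
  fix S assume "kos n a x S \<noteq> 0"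
  then have S: "S \<subseteq> {..<n}" and "(\<Sum>j\<in>{..<n} - S. koszul_sign S j * a j * x (insert j S)) \<noteq> 0"
    unfolding kos_altdef by (auto split: if_splits)
  then obtain j where j: "j \<in> {..<n} - S" "x (insert j S) \<noteq> 0"
    by (metis (no_types, lifting) mult_zero_right sum.neutral)
  then have "card (insert j S) = Suc i" using ext_memD[OF assms] by blast
  then show "S \<subseteq> {..<n} \<and> card S = i"
    using S j finite_subset[OF S] by simp
qed

lemma kos_ext_0:
  assumes "x \<in> ext n 0"
  shows "kos n a x = 0"
proof -
  have "x (insert j S) = 0" for j S
  proof (rule ccontr)
    assume "x (insert j S) \<noteq> 0"
    then have "insert j S \<subseteq> {..<n}" "card (insert j S) = 0" using ext_memD[OF assms] by blast+
    then show False using finite_subset by fastforce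
  qed
  then show ?thesis unfolding kos_def by (simp add: fun_eq_iff)
qed

lemma kos_ext: "x \<in> ext n i \<Longrightarrow> kos n a x \<in> ext n (i - 1)"
  by (cases i) (auto simp: kos_ext_0 kos_ext_Suc)

lemma kos_add: "kos n a (x + y) = kos n a x + kos n a y"
  unfolding kos_def by (auto simp: sum.distrib algebra_simps)

lemma kos_diff: "kos n a (x - y) = kos n a x - kos n a y"
  unfolding kos_def by (auto simp: sum_subtractf algebra_simps)

lemma kos_uminus: "kos n a (- x) = - kos n a x"
  unfolding kos_def by (auto simp: sum_negf algebra_simps)

lemma kos_zero [simp]: "kos n a 0 = 0"
  unfolding kos_def by (auto simp: fun_eq_iff)

lemma kos_mult_right: "kos n a (\<lambda>T. x T * r) = (\<lambda>T. kos n a x T * r)"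
  unfolding kos_def by (auto simp: fun_eq_iff sum_distrib_right mult.assoc)

lemma wedge_mult_ext:
  assumes "x \<in> ext n i"
  shows "wedge_mult n c x \<in> ext n (Suc i)"
proof (rule ext_memI)
  fix S assume "wedge_mult n c x S \<noteq> 0"
  then have S: "S \<subseteq> {..<n}" and "(\<Sum>k\<in>S. koszul_sign S k * c k * x (S - {k})) \<noteq> 0"
    unfolding wedge_mult_def by (auto split: if_splits)
  then obtain k where k: "k \<in> S" "x (S - {k}) \<noteq> 0"
    by (metis (no_types, lifting) mult_zero_right sum.neutral)
  then have "card (S - {k}) = i" using ext_memD[OF assms] by blast
  moreover have "finite S" using S finite_subset by blast
  ultimately show "S \<subseteq> {..<n} \<and> card S = Suc i"
    using S card_Suc_Diff1[of S k] k by simp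
qed

lemma ideal_zero: "is_ideal J \<Longrightarrow> 0 \<in> J"
  by (simp add: is_ideal_def)

lemma ideal_add: "is_ideal J \<Longrightarrow> x \<in> J \<Longrightarrow> y \<in> J \<Longrightarrow> x + y \<in> J"
  by (simp add: is_ideal_def)

lemma ideal_mult_left: "is_ideal J \<Longrightarrow> x \<in> J \<Longrightarrow> r * x \<in> J"
  by (simp add: is_ideal_def)

lemma ideal_mult_right: "is_ideal J \<Longrightarrow> x \<in> J \<Longrightarrow> x * r \<in> J"
  by (metis ideal_mult_left mult.commute)

lemma ideal_uminus: "is_ideal J \<Longrightarrow> x \<in> J \<Longrightarrow> - x \<in> J"
  by (metis ideal_mult_left mult_minus1)

lemma ideal_diff: "is_ideal J \<Longrightarrow> x \<in> J \<Longrightarrow> y \<in> J \<Longrightarrow> x - y \<in> J"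
  by (metis ideal_add ideal_uminus diff_conv_add_uminus)

lemma ideal_sum: "is_ideal J \<Longrightarrow> (\<And>x. x \<in> A \<Longrightarrow> g x \<in> J) \<Longrightarrow> sum g A \<in> J"
  by (induction A rule: infinite_finite_induct) (simp_all add: ideal_zero ideal_add)

lemma ideal_eq_UNIV_iff_one_mem: "is_ideal J \<Longrightarrow> J = UNIV \<longleftrightarrow> 1 \<in> J"
  by (metis UNIV_I UNIV_eq_I ideal_mult_left mult.right_neutral)

lemma kos_mem_ideal: "is_ideal J \<Longrightarrow> (\<And>T. x T \<in> J) \<Longrightarrow> kos n a x T \<in> J"
  unfolding kos_def by (auto intro!: ideal_sum ideal_mult_left simp: ideal_zero)

lemma wedge_mult_mem_ideal: "is_ideal J \<Longrightarrow> (\<And>T. x T \<in> J) \<Longrightarrow> wedge_mult n c x T \<in> J"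
  unfolding wedge_mult_def by (auto intro!: ideal_sum ideal_mult_left simp: ideal_zero)

lemma is_ideal_ideal_gen: "is_ideal (ideal_gen h k)"
  unfolding is_ideal_def ideal_gen_def
proof (intro conjI ballI allI)
  show "0 \<in> {\<Sum>j<k. r j * h j |r. True}"
    by (rule CollectI, rule exI[of _ "\<lambda>_. 0"]) simp
next
  fix x y assume "x \<in> {\<Sum>j<k. r j * h j |r. True}" "y \<in> {\<Sum>j<k. r j * h j |r. True}"
  then obtain r s where "x = (\<Sum>j<k. r j * h j)" "y = (\<Sum>j<k. s j * h j)" by auto
  then have "x + y = (\<Sum>j<k. (r j + s j) * h j)" by (simp add: sum.distrib distrib_right)
  then show "x + y \<in> {\<Sum>j<k. r j * h j |r. True}" by (intro CollectI exI[of _ "\<lambda>j. r j + s j"]) simp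
next
  fix c x assume "x \<in> {\<Sum>j<k. r j * h j |r. True}"
  then obtain r where "x = (\<Sum>j<k. r j * h j)" by auto
  then have "c * x = (\<Sum>j<k. (c * r j) * h j)" by (simp add: sum_distrib_left mult.assoc)
  then show "c * x \<in> {\<Sum>j<k. r j * h j |r. True}" by (intro CollectI exI[of _ "\<lambda>j. c * r j"]) simp
qed

lemma ideal_gen_mem: "j < k \<Longrightarrow> h j \<in> ideal_gen h k"
proof -
  assume j: "j < k"
  have "(\<Sum>i<k. (if i = j then 1 else 0) * h i) = (\<Sum>i<k. if i = j then h i else 0)"
    by (intro sum.cong) auto
  also have "\<dots> = h j" using j by (simp add: sum.delta)
  finally have "h j = (\<Sum>i<k. (if i = j then 1 else 0) * h i)" ..
  then show ?thesis
    unfolding ideal_gen_def by (intro CollectI exI[of _ "\<lambda>i. if i = j then 1 else 0"]) simp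
qed

lemma ideal_gen_0: "ideal_gen h 0 = {0}"
  unfolding ideal_gen_def by simp

lemma ideal_gen_subset:
  assumes K: "is_ideal K" and h: "\<And>j. j < k \<Longrightarrow> h j \<in> K"
  shows "ideal_gen h k \<subseteq> K"
  unfolding ideal_gen_def using h by (auto intro!: ideal_sum[OF K] ideal_mult_left[OF K])

lemma ideal_gen_cong: "(\<And>j. j < i \<Longrightarrow> x j = x' j) \<Longrightarrow> ideal_gen x i = ideal_gen x' i"
  unfolding ideal_gen_def by (metis (no_types, lifting) lessThan_iff sum.cong)

definition ideal_insert :: "'a::comm_ring_1 \<Rightarrow> 'a set \<Rightarrow> 'a set" where
  "ideal_insert y J = {j + r * y | j r. j \<in> J}"

lemma ideal_gen_Suc: "ideal_gen h (Suc k) = ideal_insert (h k) (ideal_gen h k)"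
proof (intro set_eqI iffI)
  fix x assume "x \<in> ideal_gen h (Suc k)"
  then obtain r where "x = (\<Sum>j<k. r j * h j) + r k * h k" unfolding ideal_gen_def by auto
  then show "x \<in> ideal_insert (h k) (ideal_gen h k)" unfolding ideal_insert_def ideal_gen_def by blast
next
  fix x assume "x \<in> ideal_insert (h k) (ideal_gen h k)"
  then obtain r c where x: "x = (\<Sum>j<k. r j * h j) + c * h k"
    unfolding ideal_insert_def ideal_gen_def by auto
  have "(\<Sum>j<k. r j * h j) = (\<Sum>j<k. (r(k := c)) j * h j)" by (intro sum.cong) auto
  then have "x = (\<Sum>j<Suc k. (r(k := c)) j * h j)" using x by simp
  then show "x \<in> ideal_gen h (Suc k)" unfolding ideal_gen_def by blast
qed

lemma is_ideal_ideal_insert: "is_ideal J \<Longrightarrow> is_ideal (ideal_insert y J)"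
  unfolding is_ideal_def ideal_insert_def
proof (intro conjI ballI allI; (elim conjE)?)
  assume J: "0 \<in> J" "\<forall>x\<in>J. \<forall>y\<in>J. x + y \<in> J" "\<forall>r. \<forall>x\<in>J. r * x \<in> J"
  show "0 \<in> {j + r * y |j r. j \<in> J}" using J by (metis (mono_tags, lifting) CollectI add_0 mult_zero_left)
  fix a b assume "a \<in> {j + r * y |j r. j \<in> J}" "b \<in> {j + r * y |j r. j \<in> J}"
  then obtain j r j' r' where "a = j + r * y" "b = j' + r' * y" "j \<in> J" "j' \<in> J" by auto
  then have "a + b = (j + j') + (r + r') * y" "j + j' \<in> J" using J by (auto simp: algebra_simps)
  then show "a + b \<in> {j + r * y |j r. j \<in> J}" by blast
next
  fix c a assume J: "0 \<in> J" "\<forall>x\<in>J. \<forall>y\<in>J. x + y \<in> J" "\<forall>r. \<forall>x\<in>J. r * x \<in> J"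
    and "a \<in> {j + r * y |j r. j \<in> J}"
  then obtain j r where "a = j + r * y" "j \<in> J" by auto
  then have "c * a = c * j + (c * r) * y" "c * j \<in> J" using J by (auto simp: algebra_simps)
  then show "c * a \<in> {j + r * y |j r. j \<in> J}" by blast
qed

lemma subset_ideal_insert: "is_ideal J \<Longrightarrow> J \<subseteq> ideal_insert y J"
  unfolding ideal_insert_def by (force intro: exI[of _ 0])

lemma ideal_insertI: "j \<in> J \<Longrightarrow> j + r * y \<in> ideal_insert y J"
  unfolding ideal_insert_def by blast

definition regular_mod :: "'a::comm_ring_1 set \<Rightarrow> 'a \<Rightarrow> bool" where
  "regular_mod J y \<longleftrightarrow> (\<forall>r. r * y \<in> J \<longrightarrow> r \<in> J)"

definition regular_seq :: "(nat \<Rightarrow> 'a::comm_ring_1) \<Rightarrow> nat \<Rightarrow> bool" where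
  "regular_seq x k \<longleftrightarrow> (\<forall>i<k. regular_mod (ideal_gen x i) (x i))"

lemma regular_seq_Suc:
  assumes "regular_seq x k" "regular_mod (ideal_gen x k) z"
  shows "regular_seq (x(k := z)) (Suc k)"
proof -
  have "ideal_gen (x(k := z)) i = ideal_gen x i" if "i \<le> k" for i
    using that by (intro ideal_gen_cong) auto
  then show ?thesis
    using assms unfolding regular_seq_def by (auto simp: less_Suc_eq)
qed

section \<open>Exactness of Koszul complexes modulo an ideal\<close>

text \<open>Exactness at degree i of the Koszul complex of a over R/J, with chains represented by
  lifts to R.\<close>

definition koszul_exact_mod :: "nat \<Rightarrow> (nat \<Rightarrow> 'a::comm_ring_1) \<Rightarrow> 'a set \<Rightarrow> nat \<Rightarrow> bool" where
  "koszul_exact_mod n a J i \<longleftrightarrow> (\<forall>z\<in>ext n i. (\<forall>T. kos n a z T \<in> J) \<longrightarrow>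
     (\<exists>w\<in>ext n (Suc i). \<forall>T. z T - kos n a w T \<in> J))"

lemma koszul_exact_mod_above: "is_ideal J \<Longrightarrow> n < i \<Longrightarrow> koszul_exact_mod n a J i"
  unfolding koszul_exact_mod_def using ext_eq_0_if_less
  by (fastforce simp: ideal_zero intro!: bexI[of _ 0])

lemma ext_mod_ideal_insert:
  assumes J: "is_ideal J" and x: "x \<in> ext n i" and mem: "\<And>T. x T \<in> ideal_insert y J"
  shows "\<exists>v\<in>ext n i. \<forall>T. x T - v T * y \<in> J"
proof -
  define v where "v T = (if x T = 0 then 0 else (SOME r. x T - r * y \<in> J))" for T
  have "x T - v T * y \<in> J" for T
  proof (cases "x T = 0")
    case False
    obtain j r where "x T = j + r * y" "j \<in> J" using mem[of T] unfolding ideal_insert_def by blast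
    then have "\<exists>r. x T - r * y \<in> J" by (intro exI[of _ r]) simp
    then show ?thesis using False someI_ex unfolding v_def by simp
  qed (simp add: v_def ideal_zero[OF J])
  moreover have "v \<in> ext n i"
    using x unfolding v_def ext_def by auto
  ultimately show ?thesis by blast
qed

lemma kos_mod_ideal_insert:
  assumes J: "is_ideal J" and x: "x \<in> ext n (Suc i)" and u: "u \<in> ext n (Suc (Suc i))"
    and xu: "\<And>T. x T - kos n a u T \<in> ideal_insert y J"
  shows "\<exists>v\<in>ext n (Suc i). \<forall>T. kos n a x T - kos n a v T * y \<in> J"
proof -
  have xu_ext: "(\<lambda>T. x T - kos n a u T) \<in> ext n (Suc i)"
    using ext_diff[OF x kos_ext_Suc[OF u]] by (simp add: fun_diff_def)
  obtain v where v: "v \<in> ext n (Suc i)" and r: "\<And>T. x T - kos n a u T - v T * y \<in> J"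
    using ext_mod_ideal_insert[OF J xu_ext, of y] xu by blast
  define r where "r T = x T - kos n a u T - v T * y" for T
  have "x = kos n a u + r + (\<lambda>T. v T * y)"
    unfolding r_def by (simp add: fun_eq_iff)
  then have "kos n a x = kos n a r + (\<lambda>T. kos n a v T * y)"
    by (simp add: kos_add kos_mult_right kos_kos)
  then have "kos n a x T - kos n a v T * y = kos n a r T" for T
    by (simp add: fun_eq_iff)
  moreover have "r T \<in> J" for T
    using r unfolding r_def .
  then have "kos n a r T \<in> J" for T
    by (rule kos_mem_ideal[OF J])
  ultimately show ?thesis
    by (intro bexI[OF _ v]) simp
qed

text \<open>The homotopy kos_wedge_mult_homotopy shows that y annihilates Koszul homology
  modulo J; if y is a nonzerodivisor on R/J this gives exactness one degree down.\<close>

lemma koszul_exact_mod_of_ideal_insert: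
  assumes J: "is_ideal J" and y: "y \<in> ideal_gen a n" and reg: "regular_mod J y"
    and exact: "koszul_exact_mod n a (ideal_insert y J) (Suc i)"
  shows "koszul_exact_mod n a J i"
  unfolding koszul_exact_mod_def
proof (intro ballI impI)
  fix z assume z: "z \<in> ext n i" and cyc: "\<forall>T. kos n a z T \<in> J"
  obtain c where yc: "y = (\<Sum>j<n. c j * a j)" using y unfolding ideal_gen_def by auto
  have hom: "kos n a (wedge_mult n c z) T + wedge_mult n c (kos n a z) T = y * z T" for T
    unfolding yc by (rule kos_wedge_mult_homotopy) (use ext_memD[OF z] in blast)
  have wJ: "wedge_mult n c (kos n a z) T \<in> J" for T
    using wedge_mult_mem_ideal[OF J] cyc by blast
  have "kos n a (wedge_mult n c z) T \<in> ideal_insert y J" for T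
  proof -
    have "kos n a (wedge_mult n c z) T = - wedge_mult n c (kos n a z) T + z T * y"
      using hom[of T] by (simp add: algebra_simps)
    then show ?thesis using ideal_insertI[OF ideal_uminus[OF J wJ]] by simp
  qed
  then obtain u where u: "u \<in> ext n (Suc (Suc i))"
    and wu: "\<And>T. wedge_mult n c z T - kos n a u T \<in> ideal_insert y J"
    using exact wedge_mult_ext[OF z] unfolding koszul_exact_mod_def by blast
  obtain v where v: "v \<in> ext n (Suc i)"
    and kv: "\<And>T. kos n a (wedge_mult n c z) T - kos n a v T * y \<in> J"
    using kos_mod_ideal_insert[OF J wedge_mult_ext[OF z] u wu] by blast
  have "(z T - kos n a v T) * y \<in> J" for T
  proof -
    have "(z T - kos n a v T) * y
        = wedge_mult n c (kos n a z) T + (kos n a (wedge_mult n c z) T - kos n a v T * y)"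
      using hom[of T] by (simp add: algebra_simps)
    then show ?thesis using ideal_add[OF J wJ kv] by simp
  qed
  then show "\<exists>w\<in>ext n (Suc i). \<forall>T. z T - kos n a w T \<in> J"
    using v reg unfolding regular_mod_def by blast
qed

lemma kos_cycle_mod_ideal_insert:
  assumes J: "is_ideal J" and reg: "regular_mod J y" and exact: "koszul_exact_mod n a J i"
    and w: "w \<in> ext n (Suc i)" and cyc: "\<And>T. kos n a w T \<in> ideal_insert y J"
  shows "\<exists>u\<in>ext n (Suc i). \<forall>T. kos n a (\<lambda>S. w S - u S * y) T \<in> J"
proof -
  obtain v where v: "v \<in> ext n i" and r: "\<And>T. kos n a w T - v T * y \<in> J"
    using ext_mod_ideal_insert[OF J kos_ext_Suc[OF w] cyc] by blast
  define r where "r T = kos n a w T - v T * y" for T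
  have "kos n a w = r + (\<lambda>T. v T * y)"
    unfolding r_def by (simp add: fun_eq_iff)
  then have "kos n a r + (\<lambda>T. kos n a v T * y) = 0"
    using kos_kos[of n a w] by (simp add: kos_add kos_mult_right)
  then have "kos n a v T * y = - kos n a r T" for T
    by (simp add: fun_eq_iff eq_neg_iff_add_eq_0 add.commute)
  then have "kos n a v T \<in> J" for T
    using ideal_uminus[OF J kos_mem_ideal[OF J, of r]] r reg unfolding r_def regular_mod_def
    by metis
  then obtain u where u: "u \<in> ext n (Suc i)" and vu: "\<And>T. v T - kos n a u T \<in> J"
    using exact v unfolding koszul_exact_mod_def by blast
  have "kos n a (\<lambda>S. w S - u S * y) T = r T + (v T - kos n a u T) * y" for T
    using kos_diff[of n a w "\<lambda>S. u S * y"] unfolding kos_mult_right r_def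
    by (simp add: fun_diff_def algebra_simps)
  moreover have "r T + (v T - kos n a u T) * y \<in> J" for T
    using ideal_add[OF J r ideal_mult_right[OF J vu]] unfolding r_def .
  ultimately show ?thesis
    by (intro bexI[OF _ u]) simp
qed

lemma koszul_exact_mod_ideal_insert:
  assumes J: "is_ideal J" and reg: "regular_mod J y"
    and exact: "koszul_exact_mod n a J i" and exact': "i = 0 \<or> koszul_exact_mod n a J (i - 1)"
  shows "koszul_exact_mod n a (ideal_insert y J) i"
  unfolding koszul_exact_mod_def
proof (intro ballI impI)
  fix w assume w: "w \<in> ext n i" and cyc: "\<forall>T. kos n a w T \<in> ideal_insert y J"
  obtain u where u: "u \<in> ext n i" and cyc': "\<And>T. kos n a (\<lambda>S. w S - u S * y) T \<in> J"
  proof (cases i)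
    case 0
    then show ?thesis using that[of 0] by (simp add: kos_ext_0[OF w[unfolded 0]] ideal_zero[OF J])
  next
    case (Suc i')
    then have "koszul_exact_mod n a J i'" using exact' by simp
    from kos_cycle_mod_ideal_insert[OF J reg this w[unfolded Suc]] cyc
    show ?thesis using that Suc by blast
  qed
  have "(\<lambda>S. w S - u S * y) \<in> ext n i"
    using ext_diff[OF w ext_mult_right[OF u]] by (simp add: fun_diff_def)
  then obtain t where t: "t \<in> ext n (Suc i)" and w't: "\<And>T. w T - u T * y - kos n a t T \<in> J"
    using exact cyc' unfolding koszul_exact_mod_def by blast
  have "w T - kos n a t T \<in> ideal_insert y J" for T
    using ideal_insertI[OF w't[of T], of "u T" y] by (simp add: algebra_simps)
  then show "\<exists>t\<in>ext n (Suc i). \<forall>T. w T - kos n a t T \<in> ideal_insert y J"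
    using t by blast
qed

lemma koszul_exact_regular_seq:
  assumes rs: "regular_seq x t" and x: "\<And>i. i < t \<Longrightarrow> x i \<in> ideal_gen a n"
    and i: "n < i + t"
  shows "koszul_exact_mod n a {0} i"
proof -
  have "koszul_exact_mod n a (ideal_gen x j) i" if "j + m = t" "n < i + m" for j m i
    using that
  proof (induction m arbitrary: j i)
    case 0
    then show ?case using koszul_exact_mod_above[OF is_ideal_ideal_gen] by simp
  next
    case (Suc m)
    then have "koszul_exact_mod n a (ideal_gen x (Suc j)) (Suc i)" by simp
    moreover have "regular_mod (ideal_gen x j) (x j)" "x j \<in> ideal_gen a n"
      using rs x Suc.prems unfolding regular_seq_def by auto
    ultimately show ?case
      by (intro koszul_exact_mod_of_ideal_insert[OF is_ideal_ideal_gen]) (simp_all add: ideal_gen_Suc)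
  qed
  from this[of 0 t i] show ?thesis using i by (simp add: ideal_gen_0)
qed

lemma koszul_exact_mod_regular_seq:
  assumes rs: "regular_seq x j0" and exact: "\<And>i. n < i + d \<Longrightarrow> koszul_exact_mod n a {0} i"
  shows "j \<le> j0 \<Longrightarrow> n + j < i + d \<Longrightarrow> koszul_exact_mod n a (ideal_gen x j) i"
proof (induction j arbitrary: i)
  case 0
  then show ?case using exact by (simp add: ideal_gen_0)
next
  case (Suc j)
  have "regular_mod (ideal_gen x j) (x j)" using rs Suc.prems unfolding regular_seq_def by auto
  moreover have "koszul_exact_mod n a (ideal_gen x j) i"
    "i = 0 \<or> koszul_exact_mod n a (ideal_gen x j) (i - 1)"
    using Suc by (cases i; simp)+
  ultimately show ?case
    using koszul_exact_mod_ideal_insert[OF is_ideal_ideal_gen] by (simp add: ideal_gen_Suc)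
qed

lemma kos_mem_ideal_gen: "kos n a w T \<in> ideal_gen a n"
proof -
  have "koszul_sign T j * a j * w (insert j T) \<in> ideal_gen a n" if "j < n" for j
    using ideal_mult_left[OF is_ideal_ideal_gen ideal_gen_mem[OF that],
        of "koszul_sign T j * w (insert j T)"]
    by (simp add: ac_simps)
  then show ?thesis
    unfolding kos_altdef
    by (auto intro!: ideal_sum[OF is_ideal_ideal_gen] simp: ideal_zero[OF is_ideal_ideal_gen])
qed

lemma koszul_exact_mod_top:
  assumes J: "is_ideal J" and exact: "koszul_exact_mod n a J n"
    and r: "\<And>j. j < n \<Longrightarrow> r * a j \<in> J"
  shows "r \<in> J"
proof -
  define z where "z S = (if S = {..<n} then r else 0)" for S
  have z: "z \<in> ext n n" unfolding z_def by (rule ext_memI) (auto split: if_splits)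
  have "koszul_sign T j * a j * z (insert j T) \<in> J" if "j < n" for j T
    using ideal_mult_left[OF J r[OF that], of "koszul_sign T j"] ideal_zero[OF J]
    by (simp add: z_def ac_simps)
  then have "kos n a z T \<in> J" for T
    unfolding kos_altdef by (auto intro!: ideal_sum[OF J] simp: ideal_zero[OF J])
  then obtain w where w: "w \<in> ext n (Suc n)" and zw: "\<forall>T. z T - kos n a w T \<in> J"
    using exact z unfolding koszul_exact_mod_def by blast
  then show ?thesis
    using zw[rule_format, of "{..<n}"] ext_eq_0_if_less[OF w] by (simp add: z_def)
qed

lemma one_mem_ideal_gen_if_koszul_exact_0:
  assumes "koszul_exact_mod n a {0} 0"
  shows "1 \<in> ideal_gen a n"
proof -
  define z where "z S = (if S = {} then 1 else (0::'a))" for S :: "nat set"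
  have z: "z \<in> ext n 0" unfolding z_def by (rule ext_memI) (auto split: if_splits)
  moreover have "\<forall>T. kos n a z T \<in> {0}"
    using kos_ext_0[OF z] by simp
  ultimately obtain w where "\<forall>T. z T - kos n a w T \<in> {0}"
    using assms unfolding koszul_exact_mod_def by blast
  then have "z {} = kos n a w {}" by auto
  then show ?thesis using kos_mem_ideal_gen[of n a w "{}"] unfolding z_def by simp
qed

section \<open>Associated primes in Noetherian rings\<close>

definition colon :: "'a::comm_ring_1 set \<Rightarrow> 'a \<Rightarrow> 'a set" where
  "colon K a = {r. r * a \<in> K}"

definition associated_prime :: "'a::comm_ring_1 set \<Rightarrow> 'a set \<Rightarrow> bool" where
  "associated_prime K P \<longleftrightarrow> is_prime_ideal P \<and> (\<exists>a. a \<notin> K \<and> P = colon K a)"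

lemma is_ideal_colon: "is_ideal K \<Longrightarrow> is_ideal (colon K a)"
  unfolding is_ideal_def colon_def by (auto simp: distrib_right mult.assoc)

definition ideal_psupset :: "('a::comm_ring_1 set \<times> 'a set) set" where
  "ideal_psupset = {(A, B). is_ideal A \<and> is_ideal B \<and> B \<subset> A}"

lemma is_ideal_UN_chain:
  assumes ideal: "\<And>i. is_ideal (f i)" and mono: "\<And>i. f i \<subseteq> f (Suc i)"
  shows "is_ideal (\<Union>i. f i)"
  unfolding is_ideal_def
proof (intro conjI ballI allI)
  show "0 \<in> (\<Union>i. f i)" using ideal_zero[OF ideal] by blast
next
  fix x y assume "x \<in> (\<Union>i. f i)" "y \<in> (\<Union>i. f i)"
  then obtain i j where "x \<in> f i" "y \<in> f j" by blast
  moreover have "f i \<subseteq> f (max i j)" "f j \<subseteq> f (max i j)"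
    by (simp_all add: lift_Suc_mono_le[of f, OF mono])
  ultimately have "x \<in> f (max i j)" "y \<in> f (max i j)" by blast+
  then show "x + y \<in> (\<Union>i. f i)" using ideal_add[OF ideal] by blast
next
  fix r x assume "x \<in> (\<Union>i. f i)"
  then show "r * x \<in> (\<Union>i. f i)" using ideal_mult_left[OF ideal] by blast
qed

lemma wf_ideal_psupset:
  assumes N: "noetherian_ring TYPE('a::comm_ring_1)"
  shows "wf (ideal_psupset :: ('a set \<times> 'a set) set)"
proof (rule ccontr)
  assume "\<not> wf (ideal_psupset :: ('a set \<times> 'a set) set)"
  then obtain f :: "nat \<Rightarrow> 'a set" where f: "\<And>i. (f (Suc i), f i) \<in> ideal_psupset"
    unfolding wf_iff_no_infinite_down_chain by blast
  have ideal: "is_ideal (f i)" for i using f[of i] unfolding ideal_psupset_def by auto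
  have strict: "f i \<subset> f (Suc i)" for i using f[of i] unfolding ideal_psupset_def by auto
  then have step: "\<And>i. f i \<subseteq> f (Suc i)" by blast
  have mono: "i \<le> j \<Longrightarrow> f i \<subseteq> f j" for i j
    by (rule lift_Suc_mono_le[of f, OF step])
  define U where "U = (\<Union>i. f i)"
  have "\<forall>I::'a set. is_ideal I \<longrightarrow> (\<exists>h k. I = ideal_gen h k)"
    using N by (simp add: noetherian_ring_def)
  moreover have "is_ideal U"
    unfolding U_def by (rule is_ideal_UN_chain[of f, OF ideal step])
  ultimately obtain h k where hk: "U = ideal_gen h k" by blast
  have "\<forall>j. \<exists>i. j < k \<longrightarrow> h j \<in> f i"
  proof
    fix j show "\<exists>i. j < k \<longrightarrow> h j \<in> f i"
      using ideal_gen_mem[of j k h] unfolding hk[symmetric] U_def by blast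
  qed
  then obtain idx where idx: "\<And>j. j < k \<Longrightarrow> h j \<in> f (idx j)" by metis
  define N where "N = (\<Sum>j<k. idx j)"
  have "h j \<in> f N" if "j < k" for j
  proof -
    have "idx j \<le> N" unfolding N_def using that by (intro member_le_sum) auto
    then show ?thesis using mono[of "idx j" N] idx[OF that] by blast
  qed
  then have "U \<subseteq> f N"
    unfolding hk by (rule ideal_gen_subset[OF ideal])
  then show False using strict[of N] unfolding U_def by blast
qed

lemma noetherian_maximal_element:
  assumes "noetherian_ring TYPE('a::comm_ring_1)"
    and "A \<in> S" and "\<And>B. B \<in> S \<Longrightarrow> is_ideal B"
  shows "\<exists>M\<in>(S :: 'a set set). \<forall>B\<in>S. M \<subseteq> B \<longrightarrow> B = M"
proof -
  obtain M where M: "M \<in> S" and min: "\<And>B. (B, M) \<in> ideal_psupset \<Longrightarrow> B \<notin> S"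
    using wfE_min[OF wf_ideal_psupset[OF assms(1)] assms(2)] by metis
  then show ?thesis
    using assms(3) unfolding ideal_psupset_def by blast
qed

text \<open>A maximal element among the ideals colon K b containing colon K a is prime.\<close>

lemma associated_prime_exists:
  assumes N: "noetherian_ring TYPE('a::comm_ring_1)" and K: "is_ideal K" and a: "(a::'a) \<notin> K"
  shows "\<exists>P. associated_prime K P \<and> colon K a \<subseteq> P"
proof -
  define S where "S = {colon K b | b. b \<notin> K \<and> colon K a \<subseteq> colon K b}"
  have aS: "colon K a \<in> S" unfolding S_def using a by blast
  have idS: "\<And>B. B \<in> S \<Longrightarrow> is_ideal B" using is_ideal_colon[OF K] unfolding S_def by blast
  obtain M where M: "M \<in> S" and max: "\<forall>B\<in>S. M \<subseteq> B \<longrightarrow> B = M"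
    using noetherian_maximal_element[OF N aS idS] by blast
  obtain b where b: "b \<notin> K" "colon K a \<subseteq> colon K b" "M = colon K b"
    using M unfolding S_def by blast
  have "r \<in> M \<or> s \<in> M" if rs: "r * s \<in> M" for r s
  proof (cases "r \<in> M")
    case False
    then have rb: "r * b \<notin> K" using b unfolding colon_def by simp
    have sub: "M \<subseteq> colon K (r * b)"
    proof
      fix s assume "s \<in> M"
      then have "r * (s * b) \<in> K" using b ideal_mult_left[OF K] unfolding colon_def by simp
      then show "s \<in> colon K (r * b)" unfolding colon_def by (simp add: ac_simps)
    qed
    then have "colon K (r * b) \<in> S" unfolding S_def using b rb by blast
    then have "colon K (r * b) = M" using max sub by blast
    moreover have "s \<in> colon K (r * b)" using rs b unfolding colon_def by (simp add: ac_simps)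
    ultimately show ?thesis by simp
  qed simp
  moreover have "1 \<notin> M" using b unfolding colon_def by simp
  ultimately have "is_prime_ideal M"
    unfolding is_prime_ideal_def using b is_ideal_colon[OF K] by blast
  then show ?thesis unfolding associated_prime_def using b by blast
qed

lemma colon_mult_eq_prime:
  assumes K: "is_ideal K" and P: "is_prime_ideal P" and Pc: "P = colon K c" and r: "r \<notin> P"
  shows "colon K (r * c) = P"
proof
  show "colon K (r * c) \<subseteq> P"
  proof
    fix s assume "s \<in> colon K (r * c)"
    then have "(s * r) \<in> P" unfolding Pc colon_def by (simp add: ac_simps)
    then show "s \<in> P" using P r unfolding is_prime_ideal_def by blast
  qed
next
  show "P \<subseteq> colon K (r * c)"
  proof
    fix s assume "s \<in> P"
    then have "s * c \<in> K" unfolding Pc colon_def by simp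
    then have "r * (s * c) \<in> K" by (rule ideal_mult_left[OF K])
    then show "s \<in> colon K (r * c)" unfolding colon_def by (simp add: ac_simps)
  qed
qed

lemma colon_add_mem:
  assumes K: "is_ideal K" and k: "k \<in> K"
  shows "colon K (k + x) = colon K x"
proof -
  have "t * (k + x) \<in> K \<longleftrightarrow> t * x \<in> K" for t
  proof -
    have tk: "t * k \<in> K" by (rule ideal_mult_left[OF K k])
    have "t * (k + x) = t * k + t * x" by (simp add: algebra_simps)
    then show ?thesis using tk ideal_add[OF K] ideal_diff[OF K]
      by (metis add_diff_cancel_left')
  qed
  then show ?thesis unfolding colon_def by blast
qed

lemma associated_primes_ideal_insert:
  assumes K: "is_ideal K" and P0: "is_prime_ideal P0" "P0 = colon K b" "b \<notin> K"
  shows "{P. associated_prime K P} \<subseteq> insert P0 {P. associated_prime (ideal_insert b K) P}"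
proof
  fix Q assume "Q \<in> {P. associated_prime K P}"
  then obtain c where Q: "is_prime_ideal Q" "Q = colon K c" "c \<notin> K" unfolding associated_prime_def by blast
  show "Q \<in> insert P0 {P. associated_prime (ideal_insert b K) P}"
  proof (cases "\<exists>r. r * c \<in> ideal_insert b K \<and> r * c \<notin> K")
    case True
    then obtain r k s where r: "r * c = k + s * b" "k \<in> K" "r * c \<notin> K"
      unfolding ideal_insert_def by blast
    have rQ: "r \<notin> Q" using r Q unfolding colon_def by simp
    have sP: "s \<notin> P0"
    proof
      assume "s \<in> P0"
      then have "s * b \<in> K" using P0 unfolding colon_def by simp
      then have "r * c \<in> K" using r ideal_add[OF K] by simp
      then show False using r by simp
    qed
    have "Q = colon K (r * c)" using colon_mult_eq_prime[OF K Q(1) Q(2) rQ] by simp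
    also have "\<dots> = colon K (s * b)" using r colon_add_mem[OF K r(2)] by simp
    also have "\<dots> = P0" by (rule colon_mult_eq_prime[OF K P0(1) P0(2) sP])
    finally show ?thesis by simp
  next
    case False
    have sub: "K \<subseteq> ideal_insert b K" by (rule subset_ideal_insert[OF K])
    have "colon (ideal_insert b K) c = colon K c"
      using False sub unfolding colon_def by blast
    moreover have "c \<notin> ideal_insert b K" using False by (metis mult_1 Q(3))
    ultimately have "associated_prime (ideal_insert b K) Q" unfolding associated_prime_def using Q by metis
    then show ?thesis by simp
  qed
qed

lemma finite_associated_primes:
  assumes N: "noetherian_ring TYPE('a::comm_ring_1)"
  shows "is_ideal (K::'a set) \<Longrightarrow> finite {P. associated_prime K P}"
proof (induction K rule: wf_induct[OF wf_ideal_psupset[OF N]])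
  case (1 K)
  show ?case
  proof (cases "K = UNIV")
    case True
    then show ?thesis unfolding associated_prime_def by simp
  next
    case False
    then obtain a where a: "a \<notin> K" by blast
    obtain P0 where P0: "associated_prime K P0" using associated_prime_exists[OF N "1.prems" a] by blast
    then obtain b where b: "is_prime_ideal P0" "P0 = colon K b" "b \<notin> K" unfolding associated_prime_def by blast
    have K': "is_ideal (ideal_insert b K)" by (rule is_ideal_ideal_insert[OF "1.prems"])
    have "b \<in> ideal_insert b K" using ideal_insertI[OF ideal_zero[OF "1.prems"], of 1 b] by simp
    then have "K \<subset> ideal_insert b K" using subset_ideal_insert[OF "1.prems"] b by blast
    then have "(ideal_insert b K, K) \<in> ideal_psupset" unfolding ideal_psupset_def using K' "1.prems" by blast
    then have "finite {P. associated_prime (ideal_insert b K) P}" using "1.IH" K' by blast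
    then show ?thesis using associated_primes_ideal_insert[OF "1.prems" b] by (meson finite_insert finite_subset)
  qed
qed

lemma prime_ideal_prod_mem:
  assumes P: "is_prime_ideal P" and fin: "finite A"
  shows "prod g A \<in> P \<Longrightarrow> \<exists>a\<in>A. g a \<in> P"
  using fin
proof (induction A rule: finite_induct)
  case empty
  then show ?case using P ideal_eq_UNIV_iff_one_mem unfolding is_prime_ideal_def by auto
next
  case (insert x F)
  then have "g x * prod g F \<in> P" by simp
  then have "g x \<in> P \<or> prod g F \<in> P" using P unfolding is_prime_ideal_def by blast
  then show ?case using insert by blast
qed

lemma ideal_prod_mem:
  assumes J: "is_ideal J" and fin: "finite A" and a: "a \<in> A" and ga: "g a \<in> J"
  shows "prod g A \<in> J"
proof -
  have "prod g A = g a * prod g (A - {a})" using prod.remove[OF fin a] by simp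
  then show ?thesis using ideal_mult_right[OF J ga] by simp
qed

text \<open>If I meets each P \<in> F outside the other primes of F, and F has at least two elements,
  then x P1 + \<Prod>{x P | P \<noteq> P1} \<in> I avoids every P \<in> F.\<close>

lemma prime_avoidance_irredundant:
  assumes fin: "finite F" and primes: "\<forall>P\<in>F. is_prime_ideal P"
    and I: "is_ideal I" "I \<subseteq> \<Union>F"
    and x: "\<And>P. P \<in> F \<Longrightarrow> x P \<in> I \<and> x P \<notin> \<Union>(F - {P})"
    and P1: "P1 \<in> F" and two: "F - {P1} \<noteq> {}"
  shows False
proof -
  have xP: "x P \<in> P" if "P \<in> F" for P
    using x[OF that] I(2) by blast
  have finF: "finite (F - {P1})" using fin by blast
  have "prod x (F - {P1}) \<in> I"
    using two ideal_prod_mem[OF I(1) finF] x by blast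
  then have "x P1 + prod x (F - {P1}) \<in> I"
    using ideal_add[OF I(1)] x[OF P1] by blast
  then obtain P where P: "P \<in> F" "x P1 + prod x (F - {P1}) \<in> P" using I(2) by blast
  have Pid: "is_ideal P" using primes P unfolding is_prime_ideal_def by blast
  show False
  proof (cases "P = P1")
    case True
    then have "prod x (F - {P1}) \<in> P1"
      using P ideal_diff[OF Pid] xP[OF P1] by (metis add_diff_cancel_left')
    then obtain Q where "Q \<in> F - {P1}" "x Q \<in> P1"
      using prime_ideal_prod_mem[OF _ finF] primes P1 by blast
    then show False using x P1 by blast
  next
    case False
    then have "prod x (F - {P1}) \<in> P"
      using P ideal_prod_mem[OF Pid finF, of P x] xP by blast
    then have "x P1 \<in> P"
      using P ideal_diff[OF Pid] by (metis add_diff_cancel_right')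
    then show False using x[OF P1] P False by blast
  qed
qed

lemma prime_avoidance:
  assumes "finite F"
  shows "\<forall>P\<in>F. is_prime_ideal P \<Longrightarrow> is_ideal I \<Longrightarrow> I \<subseteq> \<Union>F \<Longrightarrow> \<exists>P\<in>F. I \<subseteq> P"
  using assms
proof (induction F rule: finite_psubset_induct)
  case (psubset F)
  show ?case
  proof (cases "\<exists>P\<in>F. I \<subseteq> \<Union>(F - {P})")
    case True
    then obtain P where "P \<in> F" "I \<subseteq> \<Union>(F - {P})" by blast
    then show ?thesis using psubset.IH[of "F - {P}"] psubset.prems by blast
  next
    case False
    then have "\<forall>P\<in>F. \<exists>y. y \<in> I \<and> y \<notin> \<Union>(F - {P})" by blast
    then obtain x where x: "\<And>P. P \<in> F \<Longrightarrow> x P \<in> I \<and> x P \<notin> \<Union>(F - {P})" by metis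
    have "0 \<in> \<Union>F" using ideal_zero[of I] psubset.prems by blast
    then obtain P1 where P1: "P1 \<in> F" by (rule UnionE)
    show ?thesis
    proof (cases "F - {P1} = {}")
      case True
      then have "F = {P1}" using P1 by blast
      then show ?thesis using psubset.prems by auto
    next
      case False
      then show ?thesis
        using prime_avoidance_irredundant[OF psubset.hyps(1) psubset.prems x P1] by blast
    qed
  qed
qed

text \<open>If no nonzero element of R/J is killed by I, then I is not contained in an associated
  prime of J, hence by prime avoidance not in their union.\<close>

lemma regular_mod_exists:
  assumes N: "noetherian_ring TYPE('a::comm_ring_1)" and J: "is_ideal (J::'a set)"
    and I: "is_ideal I" and ann: "\<And>a. (\<forall>x\<in>I. x * a \<in> J) \<Longrightarrow> a \<in> J"
  shows "\<exists>x\<in>I. regular_mod J x"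
proof (rule ccontr)
  assume "\<not> (\<exists>x\<in>I. regular_mod J x)"
  then have "I \<subseteq> \<Union>{P. associated_prime J P}"
    using associated_prime_exists[OF N J] unfolding regular_mod_def colon_def
    by (fastforce simp: mult.commute)
  moreover have "\<forall>P\<in>{P. associated_prime J P}. is_prime_ideal P"
    unfolding associated_prime_def by blast
  ultimately obtain P where "associated_prime J P" "I \<subseteq> P"
    using prime_avoidance[OF finite_associated_primes[OF N J]] I by blast
  then show False
    using ann unfolding associated_prime_def colon_def by blast
qed

lemma local_ring_max_noetherian: "local_ring_max (m::'a::comm_ring_1 set) \<Longrightarrow> noetherian_ring TYPE('a)"
  unfolding local_ring_max_def by blast

lemma local_ring_max_ideal: "local_ring_max m \<Longrightarrow> is_ideal m"
  unfolding local_ring_max_def is_maximal_ideal_def by blast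

lemma local_ring_max_neq_UNIV: "local_ring_max m \<Longrightarrow> m \<noteq> UNIV"
  unfolding local_ring_max_def is_maximal_ideal_def by blast

lemma local_ring_max_greatest:
  assumes L: "local_ring_max (m::'a::comm_ring_1 set)" and K: "is_ideal K" "K \<noteq> UNIV"
  shows "K \<subseteq> m"
proof -
  define S where "S = {A. is_ideal A \<and> A \<noteq> UNIV \<and> K \<subseteq> A}"
  have KS: "K \<in> S" unfolding S_def using K by blast
  obtain M where M: "M \<in> S" and max: "\<forall>B\<in>S. M \<subseteq> B \<longrightarrow> B = M"
    using noetherian_maximal_element[OF local_ring_max_noetherian[OF L] KS] unfolding S_def by blast
  have "is_maximal_ideal M"
    unfolding is_maximal_ideal_def
  proof (intro conjI allI impI)
    show "is_ideal M" "M \<noteq> UNIV" using M unfolding S_def by auto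
  next
    fix J assume J: "is_ideal J \<and> M \<subseteq> J"
    show "J = M \<or> J = UNIV"
    proof (cases "J = UNIV")
      case False
      then have "J \<in> S" using J M unfolding S_def by blast
      then show ?thesis using max J by blast
    qed simp
  qed
  then have "M = m" using L unfolding local_ring_max_def by blast
  then show ?thesis using M unfolding S_def by blast
qed

lemma local_ring_max_unit:
  assumes L: "local_ring_max (m::'a::comm_ring_1 set)" and y: "y \<in> m"
  shows "\<exists>u. u * (1 - y) = 1"
proof (rule ccontr)
  assume nu: "\<not> (\<exists>u. u * (1 - y) = 1)"
  define K where "K = {r * (1 - y) | r. True}"
  have K: "is_ideal K" unfolding K_def is_ideal_def
  proof (intro conjI ballI allI)
    show "0 \<in> {r * (1 - y) |r. True}" by (intro CollectI exI[of _ 0]) simp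
  next
    fix a b assume "a \<in> {r * (1 - y) |r. True}" "b \<in> {r * (1 - y) |r. True}"
    then obtain r s where "a = r * (1 - y)" "b = s * (1 - y)" by blast
    then have "a + b = (r + s) * (1 - y)" by (simp add: distrib_right)
    then show "a + b \<in> {r * (1 - y) |r. True}" by blast
  next
    fix c a assume "a \<in> {r * (1 - y) |r. True}"
    then obtain r where "a = r * (1 - y)" by blast
    then have "c * a = (c * r) * (1 - y)" by (simp add: mult.assoc)
    then show "c * a \<in> {r * (1 - y) |r. True}" by blast
  qed
  have "1 \<notin> K" using nu unfolding K_def by auto
  then have "K \<noteq> UNIV" by blast
  then have "K \<subseteq> m" by (rule local_ring_max_greatest[OF L K])
  moreover have "1 - y \<in> K" unfolding K_def by (intro CollectI exI[of _ 1]) simp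
  ultimately have "1 - y \<in> m" by blast
  then have "(1 - y) + y \<in> m" using ideal_add[OF local_ring_max_ideal[OF L] _ y] by blast
  then have "1 \<in> m" by simp
  then show False
    using ideal_eq_UNIV_iff_one_mem[OF local_ring_max_ideal[OF L]] local_ring_max_neq_UNIV[OF L] by blast
qed

definition sumset :: "'a::comm_ring_1 set \<Rightarrow> 'a set \<Rightarrow> 'a set" where
  "sumset A B = {a + b | a b. a \<in> A \<and> b \<in> B}"

text \<open>The Nakayama argument: if N \<subseteq> J + y N with y \<in> m, a generator g of N modulo J + G
  can be dropped, since (1 - c y) g \<in> J + G and 1 - c y is a unit.\<close>

lemma nakayama_step:
  assumes L: "local_ring_max (m::'a::comm_ring_1 set)" and J: "is_ideal J" and G: "is_ideal G"
    and y: "y \<in> m" and NJ: "N \<subseteq> {j + y * r | j r. j \<in> J \<and> r \<in> N}"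
    and g: "g \<in> N" and sub: "N \<subseteq> {j + s | j s. j \<in> J \<and> s \<in> ideal_insert g G}"
  shows "N \<subseteq> {j + s | j s. j \<in> J \<and> s \<in> G}"
proof -
  obtain j r where jr: "g = j + y * r" "j \<in> J" "r \<in> N" using NJ g by blast
  then obtain j' g0 c where js: "r = j' + (g0 + c * g)" "j' \<in> J" "g0 \<in> G"
    using sub unfolding ideal_insert_def by blast
  obtain u where u: "u * (1 - y * c) = 1"
    using local_ring_max_unit[OF L ideal_mult_right[OF local_ring_max_ideal[OF L] y]] by blast
  have "(1 - y * c) * g = j + y * j' + y * g0"
    using jr(1) js(1) by (simp add: algebra_simps)
  then have "g = u * (j + y * j' + y * g0)"
    by (metis u mult.assoc mult_1)
  then have g_eq: "g = (u * j + u * y * j') + (u * y) * g0"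
    by (simp add: algebra_simps)
  have jJ: "u * j + u * y * j' \<in> J"
    using ideal_add[OF J ideal_mult_left[OF J jr(2)] ideal_mult_left[OF J js(2)]] by simp
  have gG: "(u * y) * g0 \<in> G" by (rule ideal_mult_left[OF G js(3)])
  show ?thesis
  proof
    fix x assume "x \<in> N"
    then obtain j0 g1 c0 where x: "x = j0 + (g1 + c0 * g)" "j0 \<in> J" "g1 \<in> G"
      using sub unfolding ideal_insert_def by blast
    have "x = (j0 + c0 * (u * j + u * y * j')) + (g1 + c0 * ((u * y) * g0))"
      using x(1) g_eq by (simp add: algebra_simps)
    moreover have "j0 + c0 * (u * j + u * y * j') \<in> J"
      using ideal_add[OF J x(2) ideal_mult_left[OF J jJ]] .
    moreover have "g1 + c0 * ((u * y) * g0) \<in> G"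
      using ideal_add[OF G x(3) ideal_mult_left[OF G gG]] .
    ultimately show "x \<in> {j + s | j s. j \<in> J \<and> s \<in> G}" by blast
  qed
qed

lemma nakayama:
  assumes L: "local_ring_max (m::'a::comm_ring_1 set)" and J: "is_ideal J" and N: "is_ideal N"
    and JN: "J \<subseteq> N" and y: "y \<in> m" and NJ: "N \<subseteq> {j + y * r | j r. j \<in> J \<and> r \<in> N}"
  shows "N \<subseteq> J"
proof -
  obtain h k where hk: "N = ideal_gen h k"
    using local_ring_max_noetherian[OF L] N unfolding noetherian_ring_def by blast
  have "N \<subseteq> {j + s | j s. j \<in> J \<and> s \<in> ideal_gen h (k - e)}" for e
  proof (induction e)
    case 0
    show ?case unfolding hk using ideal_zero[OF J] by force
  next
    case (Suc e)
    show ?case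
    proof (cases "e < k")
      case True
      then have "k - e = Suc (k - Suc e)" by simp
      moreover have "h (k - Suc e) \<in> N"
        unfolding hk using True by (intro ideal_gen_mem) simp
      ultimately show ?thesis
        using nakayama_step[OF L J is_ideal_ideal_gen y NJ] Suc.IH by (simp add: ideal_gen_Suc)
    qed (use Suc.IH in simp)
  qed
  from this[of k] show ?thesis by (auto simp: ideal_gen_0)
qed

text \<open>By Nakayama, the annihilator N of P modulo J is not contained in J + y N; an element of N
  outside J + y N lies outside J + (y), because y is regular modulo J.\<close>

lemma annihilator_not_subset_ideal_insert:
  assumes L: "local_ring_max (m::'a::comm_ring_1 set)" and J: "is_ideal J"
    and P: "associated_prime J P" and y: "y \<in> m" and r: "regular_mod J y"
  shows "\<exists>b. (\<forall>p\<in>P. b * p \<in> J) \<and> b \<notin> ideal_insert y J"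
proof -
  obtain a where a: "a \<notin> J" "P = colon J a" using P unfolding associated_prime_def by blast
  define N where "N = {r. \<forall>p\<in>P. r * p \<in> J}"
  have Nid: "is_ideal N" unfolding N_def is_ideal_def
    using ideal_zero[OF J] ideal_add[OF J] ideal_mult_left[OF J]
    by (auto simp: distrib_right mult.assoc)
  have JN: "J \<subseteq> N" unfolding N_def using ideal_mult_right[OF J] by blast
  have "a \<in> N" unfolding N_def using a unfolding colon_def by (simp add: mult.commute)
  then have "\<not> N \<subseteq> {j + y * r | j r. j \<in> J \<and> r \<in> N}"
    using nakayama[OF L J Nid JN y] a by blast
  then obtain b where b: "b \<in> N" "b \<notin> {j + y * r | j r. j \<in> J \<and> r \<in> N}" by blast
  have "b \<notin> ideal_insert y J"
  proof
    assume "b \<in> ideal_insert y J"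
    then obtain j s where js: "b = j + s * y" "j \<in> J" unfolding ideal_insert_def by blast
    have "s \<in> N" unfolding N_def
    proof (intro CollectI ballI)
      fix p assume p: "p \<in> P"
      have "b * p \<in> J" using b(1) p unfolding N_def by blast
      then have "b * p - j * p \<in> J" using ideal_diff[OF J _ ideal_mult_right[OF J js(2)]] by blast
      moreover have "b * p - j * p = (s * p) * y" using js(1) by (simp add: algebra_simps)
      ultimately show "s * p \<in> J" using r unfolding regular_mod_def by simp
    qed
    then show False using b(2) js by (auto simp: mult.commute)
  qed
  then show ?thesis using b(1) unfolding N_def by blast
qed

lemma associated_prime_ideal_insert_psubset:
  assumes L: "local_ring_max (m::'a::comm_ring_1 set)" and J: "is_ideal J"
    and P: "associated_prime J P" and y: "y \<in> m" and r: "regular_mod J y"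
  shows "\<exists>Q. associated_prime (ideal_insert y J) Q \<and> P \<subset> Q"
proof -
  obtain b where b: "\<forall>p\<in>P. b * p \<in> J" "b \<notin> ideal_insert y J"
    using annihilator_not_subset_ideal_insert[OF assms] by blast
  obtain Q where Q: "associated_prime (ideal_insert y J) Q" "colon (ideal_insert y J) b \<subseteq> Q"
    using associated_prime_exists[OF local_ring_max_noetherian[OF L] is_ideal_ideal_insert[OF J] b(2)]
    by blast
  have "P \<subseteq> colon (ideal_insert y J) b"
    using b(1) subset_ideal_insert[OF J] unfolding colon_def by (auto simp: mult.commute)
  moreover have "y \<in> colon (ideal_insert y J) b"
    unfolding colon_def using ideal_insertI[OF ideal_zero[OF J], of b y] by (simp add: mult.commute)
  moreover have "y \<notin> P"
    using P r unfolding associated_prime_def colon_def regular_mod_def by (auto simp: mult.commute)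
  ultimately show ?thesis using Q by blast
qed

lemma sorted_wrt_psubset_hd_subset:
  assumes "sorted_wrt (\<subset>) qs" "q \<in> set qs"
  shows "hd qs \<subseteq> q"
  using assms by (cases qs) auto

lemma prime_chain_from_associated_prime:
  assumes L: "local_ring_max (m::'a::comm_ring_1 set)" and rs: "regular_seq x t" and xm: "\<And>i. i < t \<Longrightarrow> x i \<in> m"
  shows "k \<le> t \<Longrightarrow> associated_prime (ideal_gen x k) P \<Longrightarrow> \<exists>qs. prime_chain qs \<and> hd qs = P \<and> length qs = t - k + 1"
proof (induction "t - k" arbitrary: k P)
  case 0
  then have "prime_chain [P]" unfolding prime_chain_def associated_prime_def by auto
  then show ?case using 0 by (intro exI[of _ "[P]"]) simp
next
  case (Suc d)
  then have k: "k < t" "d = t - Suc k" by auto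
  have r: "regular_mod (ideal_gen x k) (x k)" using rs k unfolding regular_seq_def by blast
  obtain Q where Q: "associated_prime (ideal_insert (x k) (ideal_gen x k)) Q" "P \<subset> Q"
    using associated_prime_ideal_insert_psubset[OF L is_ideal_ideal_gen Suc.prems(2) xm[OF k(1)] r] by blast
  then have "associated_prime (ideal_gen x (Suc k)) Q" by (simp add: ideal_gen_Suc)
  then obtain qs where qs: "prime_chain qs" "hd qs = Q" "length qs = t - Suc k + 1"
    using Suc.hyps(1)[OF k(2)] k by auto
  have Pp: "is_prime_ideal P" using Suc.prems unfolding associated_prime_def by blast
  have "prime_chain (P # qs)"
    unfolding prime_chain_def
  proof (intro conjI)
    show "P # qs \<noteq> []" by simp
    show "\<forall>Pa\<in>set (P # qs). is_prime_ideal Pa" using Pp qs unfolding prime_chain_def by auto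
    have "\<forall>q\<in>set qs. P \<subset> q" using sorted_wrt_psubset_hd_subset[of qs] qs Q unfolding prime_chain_def by blast
    then show "sorted_wrt (\<subset>) (P # qs)" using qs unfolding prime_chain_def by simp
  qed
  then show ?case using qs k by (intro exI[of _ "P # qs"]) simp
qed

lemma prime_height_exists:
  assumes D: "krull_dim_eq TYPE('a::comm_ring_1) d" and P: "is_prime_ideal (P::'a set)"
  shows "\<exists>h. prime_height_eq P h"
proof -
  define Ls where "Ls = {length ps | ps. prime_chain ps \<and> last ps = P}"
  have bd: "Ls \<subseteq> {..d+1}" using D unfolding Ls_def krull_dim_eq_def by auto
  have fin: "finite Ls" using finite_subset[OF bd] by simp
  have "prime_chain [P]" using P unfolding prime_chain_def by simp
  then have one: "1 \<in> Ls" unfolding Ls_def by (intro CollectI exI[of _ "[P]"]) simp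
  define h where "h = Max Ls - 1"
  have "Max Ls \<in> Ls" using fin one by (intro Max_in) auto
  moreover have "Max Ls \<ge> 1" using fin one by (simp add: Max_ge)
  ultimately have ex: "\<exists>ps. prime_chain ps \<and> last ps = P \<and> length ps = h + 1"
    unfolding h_def Ls_def by auto
  have "\<forall>ps. prime_chain ps \<and> last ps = P \<longrightarrow> length ps \<le> h + 1"
  proof (intro allI impI)
    fix ps assume "prime_chain ps \<and> last ps = P"
    then have "length ps \<in> Ls" unfolding Ls_def by blast
    then have "length ps \<le> Max Ls" using fin by simp
    then show "length ps \<le> h + 1" unfolding h_def using \<open>Max Ls \<ge> 1\<close> by simp
  qed
  then show ?thesis using ex unfolding prime_height_eq_def by blast
qed

lemma prime_chain_append:
  assumes ps: "prime_chain ps" "last ps = P" and qs: "prime_chain qs" "hd qs = P"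
  shows "prime_chain (butlast ps @ qs) \<and> length (butlast ps @ qs) = length ps - 1 + length qs"
proof -
  have psne: "ps \<noteq> []" and qsne: "qs \<noteq> []" using ps qs unfolding prime_chain_def by auto
  have pseq: "ps = butlast ps @ [P]" using psne ps(2) by (metis append_butlast_last_id)
  have sps: "sorted_wrt (\<subset>) (butlast ps @ [P])" using ps pseq unfolding prime_chain_def by metis
  then have s1: "sorted_wrt (\<subset>) (butlast ps)" and s2: "\<forall>x\<in>set (butlast ps). x \<subset> P"
    by (simp_all add: sorted_wrt_append)
  have s3: "\<forall>y\<in>set qs. P \<subseteq> y" using sorted_wrt_psubset_hd_subset[of qs] qs unfolding prime_chain_def by blast
  have "sorted_wrt (\<subset>) (butlast ps @ qs)"
    using s1 s2 s3 qs unfolding prime_chain_def by (auto simp: sorted_wrt_append)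
  moreover have "\<forall>x\<in>set (butlast ps @ qs). is_prime_ideal x"
    using ps qs unfolding prime_chain_def by (auto dest: in_set_butlastD)
  ultimately show ?thesis using qsne unfolding prime_chain_def by simp
qed

section \<open>Regular sequences in Cohen-Macaulay local rings\<close>

lemma cohen_macaulay_local_regular_seq:
  assumes "cohen_macaulay_local m d"
  shows "\<exists>y. regular_seq y d \<and> (\<forall>i<d. y i \<in> m)"
proof -
  obtain y where "regular_seq_in m y d"
    using assms unfolding cohen_macaulay_local_def depth_eq_def by blast
  then show ?thesis unfolding regular_seq_in_def regular_seq_def regular_mod_def by blast
qed

text \<open>Modulo a regular sequence of length j < depth, the Koszul complex on generators of m
  is still exact in top degree, so no nonzero element of R/(x) is killed by m.\<close>

lemma regular_mod_exists_below_depth: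
  assumes cm: "cohen_macaulay_local m d"
    and x: "regular_seq x j" and j: "j < d"
  shows "\<exists>z\<in>m. regular_mod (ideal_gen x j) z"
proof -
  have L: "local_ring_max m" using cm unfolding cohen_macaulay_local_def by blast
  obtain mg s where ms: "m = ideal_gen mg s"
    using local_ring_max_noetherian[OF L] local_ring_max_ideal[OF L]
    unfolding noetherian_ring_def by blast
  obtain y where y: "regular_seq y d" "\<forall>i<d. y i \<in> m"
    using cohen_macaulay_local_regular_seq[OF cm] by blast
  have "koszul_exact_mod s mg {0} i" if "s < i + d" for i
    using koszul_exact_regular_seq[OF y(1) _ that] y(2) ms by blast
  then have "koszul_exact_mod s mg (ideal_gen x j) s"
    by (rule koszul_exact_mod_regular_seq[OF x]) (use j in auto)
  then have top: "r \<in> ideal_gen x j" if "\<And>l. l < s \<Longrightarrow> r * mg l \<in> ideal_gen x j" for r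
    using koszul_exact_mod_top[OF is_ideal_ideal_gen] that by blast
  show ?thesis
  proof (rule regular_mod_exists[OF local_ring_max_noetherian[OF L] is_ideal_ideal_gen
        local_ring_max_ideal[OF L]])
    fix a assume a: "\<forall>z\<in>m. z * a \<in> ideal_gen x j"
    show "a \<in> ideal_gen x j"
    proof (rule top)
      fix l assume "l < s"
      then have "mg l \<in> m" unfolding ms by (rule ideal_gen_mem)
      then have "mg l * a \<in> ideal_gen x j" using a by blast
      then show "a * mg l \<in> ideal_gen x j" by (simp add: mult.commute)
    qed
  qed
qed

lemma regular_seq_extend_to_depth:
  assumes cm: "cohen_macaulay_local m d" and "k \<le> d"
    and "regular_seq x k" and "\<And>i. i < k \<Longrightarrow> x i \<in> m"
  shows "\<exists>x'. regular_seq x' d \<and> (\<forall>i<d. x' i \<in> m) \<and> (\<forall>i<k. x' i = x i)"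
  using assms(2-)
proof (induction "d - k" arbitrary: k x)
  case 0
  then show ?case by (intro exI[of _ x]) simp
next
  case (Suc e)
  then have k: "k < d" "e = d - Suc k" by auto
  obtain z where z: "z \<in> m" "regular_mod (ideal_gen x k) z"
    using regular_mod_exists_below_depth[OF cm Suc.prems(2) k(1)] by blast
  have "regular_seq (x(k := z)) (Suc k)" by (rule regular_seq_Suc[OF Suc.prems(2) z(2)])
  moreover have "\<And>i. i < Suc k \<Longrightarrow> (x(k := z)) i \<in> m" using Suc.prems z by auto
  ultimately obtain x' where "regular_seq x' d" "\<forall>i<d. x' i \<in> m" "\<forall>i<Suc k. x' i = (x(k := z)) i"
    using Suc.hyps(1)[OF k(2)] k by (metis Suc_leI)
  then show ?case by (intro exI[of _ x']) auto
qed

text \<open>A chain of primes ending at P, continued by the chain of length d - k that starts at P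
  and is obtained from an extension of x to a maximal regular sequence, has length at most
  dim R = d.\<close>

lemma associated_prime_height_le:
  assumes cm: "cohen_macaulay_local m d" and k: "k \<le> d"
    and x: "regular_seq x k" "\<And>i. i < k \<Longrightarrow> x i \<in> m"
    and P: "associated_prime (ideal_gen x k) P" and h: "prime_height_eq P h"
  shows "h \<le> k"
proof -
  have L: "local_ring_max m" and D: "krull_dim_eq TYPE('a) d"
    using cm unfolding cohen_macaulay_local_def by blast+
  obtain x' where x': "regular_seq x' d" "\<forall>i<d. x' i \<in> m" "\<forall>i<k. x' i = x i"
    using regular_seq_extend_to_depth[OF cm k x] by blast
  have "ideal_gen x' k = ideal_gen x k" using x'(3) by (intro ideal_gen_cong) auto
  then obtain qs where qs: "prime_chain qs" "hd qs = P" "length qs = d - k + 1"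
    using prime_chain_from_associated_prime[OF L x'(1), of k P] x'(2) k P by auto
  obtain ps where ps: "prime_chain ps" "last ps = P" "length ps = h + 1"
    using h unfolding prime_height_eq_def by blast
  have "prime_chain (butlast ps @ qs) \<and> length (butlast ps @ qs) = length ps - 1 + length qs"
    by (rule prime_chain_append[OF ps(1,2) qs(1,2)])
  then have "length ps - 1 + length qs \<le> d + 1" using D unfolding krull_dim_eq_def by metis
  then show ?thesis using ps qs k by simp
qed

text \<open>Grade equals height: by associated_prime_height_le, an ideal of height g > k is not
  contained in an associated prime of (x 0, ..., x (k - 1)), so prime avoidance provides the
  next element.\<close>

lemma regular_seq_in_ideal:
  fixes m I :: "'a::comm_ring_1 set"
  assumes cm: "cohen_macaulay_local m d" and I: "is_ideal I" and ht: "ideal_height_eq I g"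
  shows "k \<le> g \<Longrightarrow> \<exists>x. regular_seq x k \<and> (\<forall>i<k. x i \<in> I)"
proof (induction k)
  case 0
  then show ?case unfolding regular_seq_def by simp
next
  case (Suc k)
  have L: "local_ring_max m" and D: "krull_dim_eq TYPE('a) d"
    using cm unfolding cohen_macaulay_local_def by blast+
  from Suc obtain x where x: "regular_seq x k" "\<forall>i<k. x i \<in> I" by auto
  have "a \<in> ideal_gen x k" if aI: "\<forall>z\<in>I. z * a \<in> ideal_gen x k" for a
  proof (rule ccontr)
    assume a: "a \<notin> ideal_gen x k"
    obtain P where P: "associated_prime (ideal_gen x k) P" "colon (ideal_gen x k) a \<subseteq> P"
      using associated_prime_exists[OF local_ring_max_noetherian[OF L] is_ideal_ideal_gen a] by blast
    have IP: "I \<subseteq> P" using aI P(2) unfolding colon_def by blast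
    have Pp: "is_prime_ideal P" using P unfolding associated_prime_def by blast
    obtain h where h: "prime_height_eq P h" using prime_height_exists[OF D Pp] by blast
    have gh: "g \<le> h" using ht Pp IP h unfolding ideal_height_eq_def by blast
    have "h \<le> d"
      using D h unfolding krull_dim_eq_def prime_height_eq_def by force
    moreover have "I \<subseteq> m"
      using local_ring_max_greatest[OF L I] IP Pp unfolding is_prime_ideal_def by blast
    ultimately have "h \<le> k"
      using associated_prime_height_le[OF cm _ x(1) _ P(1) h] x(2) gh Suc.prems by auto
    then show False using gh Suc.prems by simp
  qed
  then obtain z where z: "z \<in> I" "regular_mod (ideal_gen x k) z"
    using regular_mod_exists[OF local_ring_max_noetherian[OF L] is_ideal_ideal_gen I] by blast
  then have "regular_seq (x(k := z)) (Suc k)" using regular_seq_Suc[OF x(1)] by blast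
  moreover have "\<forall>i<Suc k. (x(k := z)) i \<in> I" using x z by auto
  ultimately show ?case by blast
qed

lemma koszul_exact_above_height:
  fixes m :: "'a::comm_ring_1 set" and f :: "nat \<Rightarrow> 'a"
  assumes cm: "cohen_macaulay_local m d" and ht: "ideal_height_eq (ideal_gen f n) g"
    and i: "n < i + g"
  shows "koszul_exact_mod n f {0} i"
proof -
  obtain x where "regular_seq x g" "\<forall>i<g. x i \<in> ideal_gen f n"
    using regular_seq_in_ideal[OF cm is_ideal_ideal_gen ht] by blast
  then show ?thesis using koszul_exact_regular_seq i by blast
qed

lemma height_le_num_generators:
  fixes m :: "'a::comm_ring_1 set" and f :: "nat \<Rightarrow> 'a"
  assumes cm: "cohen_macaulay_local m d" and ht: "ideal_height_eq (ideal_gen f n) g"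
  shows "g \<le> n"
proof (rule ccontr)
  assume "\<not> g \<le> n"
  then have "koszul_exact_mod n f {0} 0"
    by (intro koszul_exact_above_height[OF cm ht]) simp
  then have "1 \<in> ideal_gen f n"
    by (rule one_mem_ideal_gen_if_koszul_exact_0)
  moreover obtain P where "is_prime_ideal P" "ideal_gen f n \<subseteq> P"
    using ht unfolding ideal_height_eq_def by blast
  ultimately show False
    using ideal_eq_UNIV_iff_one_mem unfolding is_prime_ideal_def by blast
qed

lemma lookup_constB_mult: "poly_mapping.lookup (constB r * p) k = r * poly_mapping.lookup p k"
  unfolding constB_def mult_map_scale_conv_mult[symmetric]
  by (simp add: map.rep_eq when_def)

lemma lookup_dF:
  "poly_mapping.lookup (dF n f z T) k = kos n f (\<lambda>S. poly_mapping.lookup (z S) k) T"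
proof -
  have "poly_mapping.lookup ((-1) ^ c * constB r * p) k = (-1) ^ c * r * poly_mapping.lookup p k"
    for c r and p :: "'a polyB"
    by (cases "even c") (simp_all add: minus_one_power_iff lookup_constB_mult lookup_uminus)
  then show ?thesis
    unfolding dF_def kos_def by (simp add: lookup_sum)
qed

definition dF_exact :: "nat \<Rightarrow> (nat \<Rightarrow> 'a::comm_ring_1) \<Rightarrow> nat \<Rightarrow> bool" where
  "dF_exact n f i \<longleftrightarrow> (\<forall>z\<in>ext n i. dF n f z = 0 \<longrightarrow> (\<exists>w\<in>ext n (Suc i). dF n f w = z))"

lemma ext_polyB_of_coeffs:
  fixes W :: "(nat \<Rightarrow>\<^sub>0 nat) \<Rightarrow> nat set \<Rightarrow> 'a::comm_ring_1"
  assumes W: "\<And>\<mu>. W \<mu> \<in> ext n i" and fin: "finite {\<mu>. W \<mu> \<noteq> 0}"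
  shows "\<exists>w\<in>ext n i. \<forall>S \<mu>. poly_mapping.lookup (w S) \<mu> = W \<mu> S"
proof -
  define w where "w S = Abs_poly_mapping (\<lambda>\<mu>. W \<mu> S)" for S
  have "{\<mu>. W \<mu> S \<noteq> 0} \<subseteq> {\<mu>. W \<mu> \<noteq> 0}" for S by auto
  then have lw: "poly_mapping.lookup (w S) = (\<lambda>\<mu>. W \<mu> S)" for S
    unfolding w_def using finite_subset[OF _ fin] by (simp add: lookup_Abs_poly_mapping)
  have "w \<in> ext n i"
  proof (rule ext_memI)
    fix S assume "w S \<noteq> 0"
    then obtain \<mu> where "poly_mapping.lookup (w S) \<mu> \<noteq> 0"
      by (metis lookup_zero poly_mapping_eqI)
    then show "S \<subseteq> {..<n} \<and> card S = i" using lw ext_memD[OF W] by simp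
  qed
  then show ?thesis using lw by (intro bexI[of _ w]) simp_all
qed

lemma coeffs_ext:
  assumes z: "z \<in> ext n i"
  shows "(\<lambda>S. poly_mapping.lookup (z S) \<mu>) \<in> ext n i"
proof (rule ext_memI)
  fix S assume "poly_mapping.lookup (z S) \<mu> \<noteq> 0"
  then have "z S \<noteq> 0" by auto
  then show "S \<subseteq> {..<n} \<and> card S = i" using ext_memD[OF z] by blast
qed

lemma finite_coeffs_support:
  assumes z: "z \<in> ext n i"
  shows "finite {\<mu>. (\<lambda>S. poly_mapping.lookup (z S) \<mu>) \<noteq> 0}"
proof (rule finite_subset)
  show "{\<mu>. (\<lambda>S. poly_mapping.lookup (z S) \<mu>) \<noteq> 0} \<subseteq> (\<Union>S\<in>Pow {..<n}. Poly_Mapping.keys (z S))"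
  proof
    fix \<mu> assume "\<mu> \<in> {\<mu>. (\<lambda>S. poly_mapping.lookup (z S) \<mu>) \<noteq> 0}"
    then obtain S where S: "poly_mapping.lookup (z S) \<mu> \<noteq> 0" by (auto simp: fun_eq_iff)
    then have "z S \<noteq> 0" by auto
    then have "S \<in> Pow {..<n}" using ext_memD[OF z, of S] by blast
    then show "\<mu> \<in> (\<Union>S\<in>Pow {..<n}. Poly_Mapping.keys (z S))"
      using S by (auto simp: in_keys_iff)
  qed
qed simp

text \<open>B is a free R-module, so K(f; B) is a direct sum of copies of K(f; R), one for each
  monomial \<mu>; a cycle is lifted one coefficient at a time.\<close>

lemma dF_exact_if_koszul_exact:
  fixes f :: "nat \<Rightarrow> 'a::comm_ring_1"
  assumes exact: "koszul_exact_mod n f {0} i"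
  shows "dF_exact n f i"
  unfolding dF_exact_def
proof (intro ballI impI)
  fix z assume z: "z \<in> ext n i" and cyc: "dF n f z = 0"
  define zc where "zc \<mu> = (\<lambda>S. poly_mapping.lookup (z S) \<mu>)" for \<mu>
  have "\<forall>\<mu>. \<exists>w. w \<in> ext n (Suc i) \<and> zc \<mu> = kos n f w"
  proof
    fix \<mu>
    have "\<forall>T. kos n f (zc \<mu>) T \<in> {0}"
      using lookup_dF[of n f z _ \<mu>] cyc unfolding zc_def by simp
    then show "\<exists>w. w \<in> ext n (Suc i) \<and> zc \<mu> = kos n f w"
      using exact coeffs_ext[OF z] unfolding koszul_exact_mod_def zc_def by (auto simp: fun_eq_iff)
  qed
  from choice[OF this] obtain W
    where W: "\<And>\<mu>. W \<mu> \<in> ext n (Suc i)" "\<And>\<mu>. zc \<mu> = kos n f (W \<mu>)"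
    by blast
  define W' where "W' \<mu> = (if zc \<mu> = 0 then 0 else W \<mu>)" for \<mu>
  have "{\<mu>. W' \<mu> \<noteq> 0} \<subseteq> {\<mu>. zc \<mu> \<noteq> 0}"
    unfolding W'_def by auto
  then have "finite {\<mu>. W' \<mu> \<noteq> 0}"
    using finite_coeffs_support[OF z] unfolding zc_def by (rule finite_subset)
  moreover have "W' \<mu> \<in> ext n (Suc i)" for \<mu>
    unfolding W'_def using W(1) by simp
  ultimately obtain w where w: "w \<in> ext n (Suc i)" "\<And>S \<mu>. poly_mapping.lookup (w S) \<mu> = W' \<mu> S"
    using ext_polyB_of_coeffs by metis
  have "dF n f w T = z T" for T
  proof (rule poly_mapping_eqI)
    fix \<mu>
    have "(\<lambda>S. poly_mapping.lookup (w S) \<mu>) = W' \<mu>" using w(2) by auto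
    then show "poly_mapping.lookup (dF n f w T) \<mu> = poly_mapping.lookup (z T) \<mu>"
      using W(2)[of \<mu>] unfolding lookup_dF W'_def zc_def by (auto simp: fun_eq_iff)
  qed
  then show "\<exists>w\<in>ext n (Suc i). dF n f w = z" using w(1) by auto
qed

section \<open>The spliced complex\<close>

lemma dF_dF: "dF n f (dF n f x) = 0"
  unfolding dF_def by (rule kos_kos)

lemma dY_dY: "dY n (dY n x) = 0"
  unfolding dY_def by (rule kos_kos)

lemma dF_dY: "dF n f (dY n x) = - dY n (dF n f x)"
  unfolding dF_def dY_def by (rule kos_anticommute)

lemma dF_add: "dF n f (x + y) = dF n f x + dF n f y"
  unfolding dF_def by (rule kos_add)

lemma dY_add: "dY n (x + y) = dY n x + dY n y"
  unfolding dY_def by (rule kos_add)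

lemma dF_diff: "dF n f (x - y) = dF n f x - dF n f y"
  unfolding dF_def by (rule kos_diff)

lemma dY_diff: "dY n (x - y) = dY n x - dY n y"
  unfolding dY_def by (rule kos_diff)

lemma dF_uminus: "dF n f (- x) = - dF n f x"
  unfolding dF_def by (rule kos_uminus)

lemma dY_uminus: "dY n (- x) = - dY n x"
  unfolding dY_def by (rule kos_uminus)

lemma dF_zero [simp]: "dF n f 0 = 0"
  unfolding dF_def by simp

lemma dY_zero [simp]: "dY n 0 = 0"
  unfolding dY_def by simp

lemma dF_ext: "x \<in> ext n i \<Longrightarrow> dF n f x \<in> ext n (i - 1)"
  unfolding dF_def by (rule kos_ext)

lemma dY_ext: "x \<in> ext n i \<Longrightarrow> dY n x \<in> ext n (i - 1)"
  unfolding dY_def by (rule kos_ext)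

lemma Tmod_apply:
  "x \<in> Tmod n g k \<Longrightarrow> (if c + 2 \<le> g \<and> c \<le> k then x c \<in> ext n (n + 2 + k - g) else x c = 0)"
  unfolding Tmod_def mem_Collect_eq by (rule spec)

lemma Tmod_memD: "x \<in> Tmod n g k \<Longrightarrow> c + 2 \<le> g \<Longrightarrow> c \<le> k \<Longrightarrow> x c \<in> ext n (n + 2 + k - g)"
  using Tmod_apply[of x n g k c] by simp

lemma Tmod_eq_0: "x \<in> Tmod n g k \<Longrightarrow> \<not> (c + 2 \<le> g \<and> c \<le> k) \<Longrightarrow> x c = 0"
  using Tmod_apply[of x n g k c] by presburger

lemma Tmod_memI:
  "(\<And>c. c + 2 \<le> g \<Longrightarrow> c \<le> k \<Longrightarrow> x c \<in> ext n (n + 2 + k - g)) \<Longrightarrow>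
   (\<And>c. \<not> (c + 2 \<le> g \<and> c \<le> k) \<Longrightarrow> x c = 0) \<Longrightarrow> x \<in> Tmod n g k"
  unfolding Tmod_def by simp

lemma Tmod_zero: "0 \<in> Tmod n g k"
  by (rule Tmod_memI) auto

lemma Tmod_add:
  assumes x: "x \<in> Tmod n g k" and y: "y \<in> Tmod n g k"
  shows "x + y \<in> Tmod n g k"
proof (rule Tmod_memI)
  fix c assume "c + 2 \<le> g" "c \<le> k"
  then show "(x + y) c \<in> ext n (n + 2 + k - g)"
    using ext_add[OF Tmod_memD[OF x] Tmod_memD[OF y]] by simp
next
  fix c assume "\<not> (c + 2 \<le> g \<and> c \<le> k)"
  then show "(x + y) c = 0" using Tmod_eq_0[OF x] Tmod_eq_0[OF y] by simp
qed

lemma Tmod_diff: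
  assumes x: "x \<in> Tmod n g k" and y: "y \<in> Tmod n g k"
  shows "x - y \<in> Tmod n g k"
proof (rule Tmod_memI)
  fix c assume "c + 2 \<le> g" "c \<le> k"
  then show "(x - y) c \<in> ext n (n + 2 + k - g)"
    using ext_diff[OF Tmod_memD[OF x] Tmod_memD[OF y]] by simp
next
  fix c assume "\<not> (c + 2 \<le> g \<and> c \<le> k)"
  then show "(x - y) c = 0" using Tmod_eq_0[OF x] Tmod_eq_0[OF y] by simp
qed

lemma Tdiff_apply:
  "c + 2 \<le> g \<Longrightarrow> c + 1 \<le> k \<Longrightarrow> Tdiff n f g k x c = dF n f (x c) + dY n (x (c + 1))"
  unfolding Tdiff_def by simp

lemma Tdiff_eq_0: "\<not> (c + 2 \<le> g \<and> c + 1 \<le> k) \<Longrightarrow> Tdiff n f g k x c = 0"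
  unfolding Tdiff_def by auto

lemma Tdiff_zero [simp]: "Tdiff n f g k 0 = 0"
  unfolding Tdiff_def by (auto simp: fun_eq_iff)

lemma Tdiff_add: "Tdiff n f g k (x + y) = Tdiff n f g k x + Tdiff n f g k y"
  unfolding Tdiff_def by (auto simp: fun_eq_iff dF_add dY_add)

lemma Tdiff_diff: "Tdiff n f g k (x - y) = Tdiff n f g k x - Tdiff n f g k y"
  unfolding Tdiff_def by (auto simp: fun_eq_iff dF_diff dY_diff)

lemma Tdiff_Tmod:
  assumes x: "x \<in> Tmod n g (Suc k)"
  shows "Tdiff n f g (Suc k) x \<in> Tmod n g k"
proof (rule Tmod_memI)
  fix c assume c: "c + 2 \<le> g" "c \<le> k"
  have "dF n f (x c) \<in> ext n (n + 2 + k - g)"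
    using dF_ext[OF Tmod_memD[OF x c(1)], of f] c(2) by simp
  moreover have "dY n (x (c + 1)) \<in> ext n (n + 2 + k - g)"
  proof (cases "c + 1 + 2 \<le> g")
    case True
    then show ?thesis using dY_ext[OF Tmod_memD[OF x True]] c(2) by simp
  qed (simp add: Tmod_eq_0[OF x])
  ultimately show "Tdiff n f g (Suc k) x c \<in> ext n (n + 2 + k - g)"
    using c ext_add by (simp add: Tdiff_apply)
qed (simp add: Tdiff_eq_0)

lemma Tdiff_Tdiff:
  assumes x: "x \<in> Tmod n g (Suc (Suc k))"
  shows "Tdiff n f g (Suc k) (Tdiff n f g (Suc (Suc k)) x) = 0"
proof
  fix c
  show "Tdiff n f g (Suc k) (Tdiff n f g (Suc (Suc k)) x) c = 0 c"
  proof (cases "c + 2 \<le> g \<and> c + 1 \<le> Suc k")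
    case row: True
    show ?thesis
    proof (cases "c + 3 \<le> g")
      case True
      then show ?thesis
        using row by (simp add: Tdiff_apply dF_add dY_add dF_dF dY_dY dF_dY)
    next
      case False
      then show ?thesis
        using row Tmod_eq_0[OF x, of "c + 1"] by (simp add: Tdiff_apply Tdiff_eq_0 dF_dF)
    qed
  qed (simp add: Tdiff_eq_0)
qed

lemma Taug_Zmod:
  assumes "1 \<le> g" "g \<le> n" and x: "x \<in> Tmod n g 0"
  shows "Taug n f x \<in> Zmod n f (n - g)"
proof -
  have "Taug n f x \<in> ext n (n - g)"
  proof (cases "2 \<le> g")
    case True
    then have "x 0 \<in> ext n (n + 2 - g)" using Tmod_memD[OF x, of 0] by simp
    then have "dY n (dF n f (x 0)) \<in> ext n (n + 2 - g - 1 - 1)" by (intro dY_ext dF_ext)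
    then show ?thesis unfolding Taug_def using assms(2) by simp
  next
    case False
    then show ?thesis using Tmod_eq_0[OF x, of 0] unfolding Taug_def by simp
  qed
  moreover have "dF n f (Taug n f x) = 0" unfolding Taug_def by (simp add: dF_dY dF_dF)
  ultimately show ?thesis unfolding Zmod_def using assms(1,2) by simp
qed

lemma Taug_Tdiff: "Taug n f (Tdiff n f g 1 x) = 0"
  by (cases "2 \<le> g")
    (simp_all add: Taug_def Tdiff_apply Tdiff_eq_0 dF_add dF_dF dF_dY dY_uminus dY_dY)

lemma L_is_complex_if:
  assumes "1 \<le> g" "g \<le> n"
  shows "L_is_complex n f g"
proof -
  have "dY n (Taug n f x) = 0" for x
    unfolding Taug_def by (simp add: dY_dY)
  then show ?thesis
    unfolding L_is_complex_def using Taug_Zmod[OF assms] Tdiff_Tmod Tdiff_Tdiff Taug_Tdiff by blast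
qed

context
  fixes n g :: nat and f :: "nat \<Rightarrow> 'a::comm_ring_1"
  assumes exact: "\<And>i. n < i + g \<Longrightarrow> dF_exact n f i" and Z: "Z_acyclic n f" and gn: "g \<le> n"
begin

text \<open>The corner of the double complex, where T meets Z: by acyclicity of Z, the d_y-cycle d_f a
  is the d_y-image of a cycle u, which lifts along d_f to v; then a + d_y v is a d_f-cycle and
  lifts to w.\<close>

lemma dY_dF_cycle_lift:
  assumes t: "t + 2 \<le> g" and a: "a \<in> ext n (n + 2 + t - g)" and cyc: "dY n (dF n f a) = 0"
  shows "\<exists>w v. w \<in> ext n (n + 3 + t - g) \<and> v \<in> ext n (n + 3 + t - g) \<and>
     dF n f w - dY n v = a \<and> (g < t + 3 \<longrightarrow> v = 0)"
proof -
  define M where "M = Suc (n - g + t)"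
  have NM: "n + 2 + t - g = Suc M" and N3: "n + 3 + t - g = Suc (Suc M)" and Mn: "M < n" "1 \<le> M"
    unfolding M_def using gn t by auto
  have exact_M: "dF_exact n f (Suc M)" using gn by (intro exact) (simp add: M_def)
  have "dF n f a \<in> Zmod n f M"
    unfolding Zmod_def using Mn dF_ext[OF a[unfolded NM]] by (simp add: dF_dF)
  then obtain u where u: "u \<in> Zmod n f (M + 1)" "dY n u = dF n f a"
    using Z Mn cyc unfolding Z_acyclic_def by blast
  obtain v where v: "v \<in> ext n (Suc (Suc M))" "dF n f v = u" "\<not> Suc M < n \<longrightarrow> v = 0"
  proof (cases "Suc M < n")
    case True
    then have "u \<in> ext n (Suc M)" "dF n f u = 0" using u unfolding Zmod_def by auto
    then show ?thesis
      using that True exact_M unfolding dF_exact_def by blast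
  next
    case False
    then show ?thesis using that[of 0] u unfolding Zmod_def by simp
  qed
  have "dY n v \<in> ext n (Suc M)" using dY_ext[OF v(1)] by simp
  then have "a + dY n v \<in> ext n (Suc M)"
    using ext_add a[unfolded NM] by blast
  moreover have "dF n f (a + dY n v) = 0"
    using u(2) v(2) by (simp add: dF_add dF_dY)
  ultimately obtain w where w: "w \<in> ext n (Suc (Suc M))" "dF n f w = a + dY n v"
    using exact_M unfolding dF_exact_def by blast
  show ?thesis
    using w v unfolding N3 M_def by (intro exI[of _ w] exI[of _ v]) auto
qed

lemma Tdiff_lift_corner:
  assumes t: "t + 2 \<le> g" and a: "a \<in> ext n (n + 2 + t - g)" and cyc: "dY n (dF n f a) = 0"
  shows "\<exists>z\<in>Tmod n g (Suc t). \<forall>c\<ge>t. Tdiff n f g (Suc t) z c = (if c = t then a else 0)"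
proof -
  obtain w v where wv: "w \<in> ext n (n + 3 + t - g)" "v \<in> ext n (n + 3 + t - g)"
    "dF n f w - dY n v = a" "g < t + 3 \<longrightarrow> v = 0"
    using dY_dF_cycle_lift[OF assms] by blast
  define z where "z c = (if c = t then w else if c = Suc t then - v else 0)" for c
  have "z \<in> Tmod n g (Suc t)"
  proof (rule Tmod_memI)
    have "n + 2 + Suc t - g = n + 3 + t - g" by simp
    then show "z c \<in> ext n (n + 2 + Suc t - g)" for c
      using wv(1) ext_uminus[OF wv(2)] unfolding z_def by simp
  next
    fix c assume "\<not> (c + 2 \<le> g \<and> c \<le> Suc t)"
    then show "z c = 0" using t wv(4) unfolding z_def by auto
  qed
  moreover have "Tdiff n f g (Suc t) z c = (if c = t then a else 0)" if "t \<le> c" for c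
    using that t wv(3) by (auto simp: Tdiff_apply Tdiff_eq_0 z_def dY_uminus)
  ultimately show ?thesis by blast
qed

lemma Tdiff_lift_interior:
  assumes t: "t + 2 \<le> g" "t \<le> k" and a: "a \<in> ext n (n + 2 + Suc k - g)" and cyc: "dF n f a = 0"
  shows "\<exists>z\<in>Tmod n g (Suc (Suc k)). \<forall>c\<ge>t.
    Tdiff n f g (Suc (Suc k)) z c = (if c = t then a else 0)"
proof -
  obtain w where w: "w \<in> ext n (Suc (n + 2 + Suc k - g))" "dF n f w = a"
    using exact[of "n + 2 + Suc k - g"] a cyc gn unfolding dF_exact_def by auto
  define z where "z c = (if c = t then w else 0)" for c
  have "z \<in> Tmod n g (Suc (Suc k))"
  proof (rule Tmod_memI)
    fix c show "z c \<in> ext n (n + 2 + Suc (Suc k) - g)"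
      using w(1) gn unfolding z_def by (simp add: Suc_diff_le)
  next
    fix c assume "\<not> (c + 2 \<le> g \<and> c \<le> Suc (Suc k))"
    then show "z c = 0" using t unfolding z_def by auto
  qed
  moreover have "Tdiff n f g (Suc (Suc k)) z c = (if c = t then a else 0)" if "t \<le> c" for c
    using that t w(2) by (auto simp: Tdiff_def z_def)
  ultimately show ?thesis by blast
qed

lemma Tdiff_lift_top:
  assumes x: "x \<in> Tmod n g (Suc k)" and cyc: "Tdiff n f g (Suc k) x = 0"
    and top: "\<And>c. t < c \<Longrightarrow> x c = 0"
  shows "\<exists>z\<in>Tmod n g (Suc (Suc k)). \<forall>c\<ge>t. Tdiff n f g (Suc (Suc k)) z c = x c"
proof -
  have x_eq: "(if c = t then x t else 0) = x c" if "t \<le> c" for c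
    using that top by auto
  consider (outside) "\<not> (t + 2 \<le> g \<and> t \<le> Suc k)" | (interior) "t + 2 \<le> g" "t \<le> k"
    | (corner) "t + 2 \<le> g" "t = Suc k"
  proof (cases "t + 2 \<le> g \<and> t \<le> Suc k")
    case True
    then show ?thesis using that(2,3) by (cases "t \<le> k") auto
  qed (rule that(1))
  then show ?thesis
  proof cases
    case outside
    then have "\<forall>c\<ge>t. Tdiff n f g (Suc (Suc k)) 0 c = x c"
      using x_eq Tmod_eq_0[OF x outside] by (metis Tdiff_zero zero_fun_apply)
    then show ?thesis using Tmod_zero by blast
  next
    case interior
    have a: "x t \<in> ext n (n + 2 + Suc k - g)"
      using Tmod_memD[OF x interior(1)] interior(2) by simp
    have "dF n f (x t) = 0"
      using fun_cong[OF cyc, of t] interior top[of "t + 1"] by (simp add: Tdiff_apply)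
    then obtain z where z: "z \<in> Tmod n g (Suc (Suc k))"
      "\<And>c. t \<le> c \<Longrightarrow> Tdiff n f g (Suc (Suc k)) z c = (if c = t then x t else 0)"
      using Tdiff_lift_interior[OF interior a] by blast
    then have "\<forall>c\<ge>t. Tdiff n f g (Suc (Suc k)) z c = x c" using x_eq by simp
    then show ?thesis using z(1) by blast
  next
    case corner
    have a: "x t \<in> ext n (n + 2 + t - g)"
      using Tmod_memD[OF x corner(1)] corner(2) by simp
    have "dF n f (dF n f (x k) + dY n (x t)) = 0"
      using fun_cong[OF cyc, of k] corner by (simp add: Tdiff_apply)
    then have "dY n (dF n f (x t)) = 0"
      by (simp add: dF_add dF_dF dF_dY)
    then obtain z where z: "z \<in> Tmod n g (Suc t)"
      "\<And>c. t \<le> c \<Longrightarrow> Tdiff n f g (Suc t) z c = (if c = t then x t else 0)"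
      using Tdiff_lift_corner[OF corner(1) a] by blast
    then have "\<forall>c\<ge>t. Tdiff n f g (Suc (Suc k)) z c = x c" using x_eq corner(2) by simp
    then show ?thesis using z(1) corner(2) by blast
  qed
qed

lemma Tdiff_exact:
  assumes "x \<in> Tmod n g (Suc k)" "Tdiff n f g (Suc k) x = 0"
  shows "\<exists>z\<in>Tmod n g (Suc (Suc k)). Tdiff n f g (Suc (Suc k)) z = x"
proof -
  have "\<exists>z\<in>Tmod n g (Suc (Suc k)). Tdiff n f g (Suc (Suc k)) z = x"
    if "x \<in> Tmod n g (Suc k)" "Tdiff n f g (Suc k) x = 0" "\<And>c. t \<le> c \<Longrightarrow> x c = 0" for t x
    using that
  proof (induction t arbitrary: x)
    case 0
    then have "x = 0" by (simp add: fun_eq_iff)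
    then show ?case using Tmod_zero Tdiff_zero by metis
  next
    case (Suc t)
    obtain z0 where z0: "z0 \<in> Tmod n g (Suc (Suc k))"
      and z0x: "\<And>c. t \<le> c \<Longrightarrow> Tdiff n f g (Suc (Suc k)) z0 c = x c"
      using Tdiff_lift_top[OF Suc.prems(1,2)] Suc.prems(3) by (metis Suc_leI)
    define x' where "x' = x - Tdiff n f g (Suc (Suc k)) z0"
    have "x' \<in> Tmod n g (Suc k)"
      unfolding x'_def by (rule Tmod_diff[OF Suc.prems(1) Tdiff_Tmod[OF z0]])
    moreover have "Tdiff n f g (Suc k) x' = 0"
      unfolding x'_def Tdiff_diff Tdiff_Tdiff[OF z0] Suc.prems(2) by simp
    moreover have "x' c = 0" if "t \<le> c" for c
      unfolding x'_def using z0x[OF that] by simp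
    ultimately obtain z1 where z1: "z1 \<in> Tmod n g (Suc (Suc k))" "Tdiff n f g (Suc (Suc k)) z1 = x'"
      using Suc.IH by blast
    have "Tdiff n f g (Suc (Suc k)) (z0 + z1) = x"
      unfolding Tdiff_add z1(2) x'_def by simp
    then show ?case using Tmod_add[OF z0 z1(1)] by blast
  qed
  from this[of _ g] show ?thesis using assms Tmod_eq_0[OF assms(1)] by simp
qed

lemma Taug_exact:
  assumes x: "x \<in> Tmod n g 0" and cyc: "Taug n f x = 0"
  shows "\<exists>z\<in>Tmod n g 1. Tdiff n f g 1 z = x"
proof (cases "2 \<le> g")
  case False
  then have "x = 0" using Tmod_eq_0[OF x] by (auto simp: fun_eq_iff)
  then show ?thesis using Tmod_zero Tdiff_zero by metis
next
  case True
  then obtain z where z: "z \<in> Tmod n g 1" "\<And>c. Tdiff n f g 1 z c = (if c = 0 then x 0 else 0)"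
    using Tdiff_lift_corner[of 0 "x 0"] Tmod_memD[OF x, of 0] cyc unfolding Taug_def by auto
  have "Tdiff n f g 1 z = x"
  proof
    fix c show "Tdiff n f g 1 z c = x c"
      using z(2)[of c] Tmod_eq_0[OF x, of c] by (cases "c = 0") auto
  qed
  then show ?thesis using z(1) by blast
qed

lemma Zmod_exact_Taug:
  assumes "1 \<le> g" "1 \<le> n - g" and x: "x \<in> Zmod n f (n - g)" and cyc: "dY n x = 0"
  shows "\<exists>t\<in>Tmod n g 0. Taug n f t = x"
proof -
  have "n - g < n" using assms(1,2) by simp
  then obtain z where z: "z \<in> Zmod n f (n - g + 1)" "dY n z = x"
    using Z assms(2) x cyc unfolding Z_acyclic_def by blast
  show ?thesis
  proof (cases "n - g + 1 < n")
    case False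
    then have "x = 0" using z unfolding Zmod_def by simp
    then show ?thesis using Tmod_zero unfolding Taug_def by (intro bexI[of _ 0]) simp_all
  next
    case True
    then have "z \<in> ext n (n - g + 1)" "dF n f z = 0" using z unfolding Zmod_def by auto
    then obtain w where w: "w \<in> ext n (n + 2 - g)" "dF n f w = z"
      using exact[of "n - g + 1"] gn unfolding dF_exact_def by (auto simp: Suc_diff_le)
    define t where "t c = (if c = 0 then w else 0)" for c :: nat
    have "t \<in> Tmod n g 0"
      using w(1) True unfolding t_def by (intro Tmod_memI) auto
    moreover have "Taug n f t = x" unfolding Taug_def t_def using w(2) z(2) by simp
    ultimately show ?thesis by blast
  qed
qed

lemma L_acyclic_if: "1 \<le> g \<Longrightarrow> L_acyclic n f g"
  unfolding L_acyclic_def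
  using Z Zmod_exact_Taug Taug_exact Tdiff_exact unfolding Z_acyclic_def by auto

end

theorem proposition4p5:
  fixes m :: "'a::comm_ring_1 set" and f :: "nat \<Rightarrow> 'a" and n d g :: nat
  assumes "cohen_macaulay_local m d"
    and "minimally_generates f n (ideal_gen f n)"
    and "ideal_height_eq (ideal_gen f n) g"
    and "1 \<le> g"
  shows "L_is_complex n f g \<and> (Z_acyclic n f \<longrightarrow> L_acyclic n f g)"
proof -
  have gn: "g \<le> n" by (rule height_le_num_generators[OF assms(1,3)])
  have "dF_exact n f i" if "n < i + g" for i
    using dF_exact_if_koszul_exact koszul_exact_above_height[OF assms(1,3) that] .
  then show ?thesis
    using L_is_complex_if[OF assms(4) gn] L_acyclic_if[OF _ _ gn assms(4)] by blast
qed

end
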